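(* Assume the inverse theorem $\mathrm{GI}(s)$ (as in the context). For every $s\ge1$, $M$, $\epsilon>0$ and growth function $\Phi$ there exist $K=K(s,M,\epsilon)$ and a growth function $\Phi'=\Phi'(s,\epsilon,M,\Phi)$ such that for every $s$-factor $\mathcal{B}$ of complexity $\le M$ and growth function $\Phi$ and every $f:[N]\to[0,1]$ there is a refinement $\mathcal{B}'$ of $\mathcal{B}$ of complexity $\le K$ and growth function $\Phi'$ with $\|f-\mathbb{E}(f|\mathcal{B}')\|_{U^{s+1}[N]}\le\epsilon$.
   Context: $\mathrm{GI}(s)$: for every $\delta>0$ there are $C,c>0$ such that any $f:[N]\to\mathbb{C}$ with $|f|\le1$ and $\|f\|_{U^{s+1}[N]}\ge\delta$ satisfies $|\mathbb{E}_{n\in[N]}f\overline{\psi}|\ge c$ for some degree $\le s$ polynomial nilsequence $\psi$ of complexity $\le C$ (i.e. $\psi(n)=F(g(n)\Gamma)$ with $(G/\Gamma,G_\bullet)$ a filtered nilmanifold of degree $\le s$ and complexity $\le C$, $g$ a polynomial sequence adapted to $G_\bullet$, $F$ of Lipschitz norm $\le C$). Growth function: monotone increasing $\Phi:\mathbb{R}^+\to\mathbb{R}^+$, $\Phi(M)\ge M$. $E\subseteq[N]$ is $s$-measurable with growth function $\Phi$ if for every $M\ge1$ there is a degree $\le s$ polynomial nilsequence $\psi:\mathbb{Z}\to[0,1]$ of complexity $\le\Phi(M)$ with $\|\psi-1_E\|_{L^2[N]}\le1/M$. An $s$-factor of complexity $\le M$ and growth function $\Phi$ is a partition of $[N]$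 into at most $M$ cells, each $s$-measurable with growth function $\Phi$. $\mathbb{E}(f|\mathcal{B})$ equals $\mathbb{E}_{n\in E_j}f(n)$ on each cell $E_j$. Refinement: every cell of $\mathcal{B}'$ is contained in a cell of $\mathcal{B}$. $U^k[N]$ is the normalised Gowers norm on $[N]$. *)

theory Defs
  imports "HOL-Analysis.Analysis"
begin

definition avgN :: "nat \<Rightarrow> (int \<Rightarrow> 'a::field) \<Rightarrow> 'a" where
  "avgN N h = (\<Sum>n\<in>{1..int N}. h n) / of_nat N"

definition L2N :: "nat \<Rightarrow> (int \<Rightarrow> complex) \<Rightarrow> real" where
  "L2N N h = sqrt (avgN N (\<lambda>n. (cmod (h n))\<^sup>2))"

definition cj :: "nat \<Rightarrow> complex \<Rightarrow> complex" where
  "cj j z = (if even j then z else cnj z)"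

definition gsum :: "nat \<Rightarrow> nat \<Rightarrow> (int \<Rightarrow> complex) \<Rightarrow> complex" where
  "gsum k N f =
     (\<Sum>x\<in>{1..int N}. \<Sum>h\<in>PiE {..<k} (\<lambda>_. {- int N..int N}).
        \<Prod>w\<in>Pow {..<k}. cj (card w)
           (let z = x + (\<Sum>i\<in>w. h i) in if z \<in> {1..int N} then f z else 0))"

text \<open>Normalised Gowers norm U^k[N]: the U^k norm of f 1_[N] divided by that of 1_[N].\<close>
definition gowersU :: "nat \<Rightarrow> nat \<Rightarrow> (int \<Rightarrow> complex) \<Rightarrow> real" where
  "gowersU k N f = (Re (gsum k N f) / Re (gsum k N (\<lambda>_. 1))) powr (1 / 2 ^ k)"

text \<open>A filtered nilmanifold with a Mal'cev basis X_0..X_{m-1} is modelled by its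
  Mal'cev coordinates: G is identified with R^m (vectors nat => real vanishing from m on),
  the group law mul is polynomial, exp(t X_i) is t e_i, every x equals
  exp(x_0 X_0) ... exp(x_{m-1} X_{m-1}), Gamma is the integer points, and
  G_i is the set of points whose first m - d i coordinates vanish.\<close>

definition gid :: "nat \<Rightarrow> real" where
  "gid = (\<lambda>_. 0)"

definition Vm :: "nat \<Rightarrow> (nat \<Rightarrow> real) set" where
  "Vm m = {x. \<forall>k\<ge>m. x k = 0}"

inductive polyfn :: "('a \<Rightarrow> real) set \<Rightarrow> ('a \<Rightarrow> real) \<Rightarrow> bool" for V where
  pconst: "polyfn V (\<lambda>_. a)"
| pvar: "v \<in> V \<Longrightarrow> polyfn V v"
| padd: "polyfn V p \<Longrightarrow> polyfn V q \<Longrightarrow> polyfn V (\<lambda>z. p z + q z)"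
| pmul: "polyfn V p \<Longrightarrow> polyfn V q \<Longrightarrow> polyfn V (\<lambda>z. p z * q z)"

definition ecoord :: "nat \<Rightarrow> real \<Rightarrow> (nat \<Rightarrow> real)" where
  "ecoord i t = (\<lambda>k. if k = i then t else 0)"

definition ginv :: "nat \<Rightarrow> ((nat \<Rightarrow> real) \<Rightarrow> (nat \<Rightarrow> real) \<Rightarrow> (nat \<Rightarrow> real))
                    \<Rightarrow> (nat \<Rightarrow> real) \<Rightarrow> (nat \<Rightarrow> real)" where
  "ginv m mul x = (THE y. y \<in> Vm m \<and> mul x y = gid)"

definition gcomm :: "nat \<Rightarrow> ((nat \<Rightarrow> real) \<Rightarrow> (nat \<Rightarrow> real) \<Rightarrow> (nat \<Rightarrow> real))
                    \<Rightarrow> (nat \<Rightarrow> real) \<Rightarrow> (nat \<Rightarrow> real) \<Rightarrow> (nat \<Rightarrow> real)" where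
  "gcomm m mul x y = mul (mul (mul x y) (ginv m mul x)) (ginv m mul y)"

definition Gsub :: "nat \<Rightarrow> (nat \<Rightarrow> nat) \<Rightarrow> nat \<Rightarrow> (nat \<Rightarrow> real) set" where
  "Gsub m d i = {x \<in> Vm m. \<forall>k < m - d i. x k = 0}"

definition Gam :: "nat \<Rightarrow> (nat \<Rightarrow> real) set" where
  "Gam m = {x \<in> Vm m. \<forall>k. x k \<in> \<int>}"

text \<open>malcev_model s m mul c d: filtered nilmanifold of degree <= s, dimension m,
  Mal'cev basis adapted to the filtration with structure constants c i j k,
  i.e. [X_i, X_j] = sum_k c i j k X_k, and d i = dim G_i.\<close>
definition malcev_model :: "nat \<Rightarrow> nat \<Rightarrow> ((nat \<Rightarrow> real) \<Rightarrow> (nat \<Rightarrow> real) \<Rightarrow> (nat \<Rightarrow> real))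
      \<Rightarrow> (nat \<Rightarrow> nat \<Rightarrow> nat \<Rightarrow> real) \<Rightarrow> (nat \<Rightarrow> nat) \<Rightarrow> bool" where
  "malcev_model s m mul c d \<longleftrightarrow>
     (\<forall>x\<in>Vm m. \<forall>y\<in>Vm m. mul x y \<in> Vm m) \<and>
     (\<forall>x\<in>Vm m. \<forall>y\<in>Vm m. \<forall>z\<in>Vm m. mul (mul x y) z = mul x (mul y z)) \<and>
     (\<forall>x\<in>Vm m. mul gid x = x \<and> mul x gid = x) \<and>
     (\<forall>x\<in>Vm m. \<exists>y\<in>Vm m. mul x y = gid \<and> mul y x = gid) \<and>
     (\<forall>k<m. \<exists>p. polyfn ({\<lambda>(x, y). x j | j. j < m} \<union> {\<lambda>(x, y). y j | j. j < m}) p \<and>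
                  (\<forall>x\<in>Vm m. \<forall>y\<in>Vm m. mul x y k = p (x, y))) \<and>
     (\<forall>i<m. \<forall>a b. mul (ecoord i a) (ecoord i b) = ecoord i (a + b)) \<and>
     (\<forall>x\<in>Vm m. x = foldr (\<lambda>i acc. mul (ecoord i (x i)) acc) [0..<m] gid) \<and>
     (\<forall>i<m. \<forall>j<m. \<forall>k<m.
        ((\<lambda>(a, b). gcomm m mul (ecoord i a) (ecoord j b) k / (a * b)) \<longlongrightarrow> c i j k)
          (at (0, 0) within {(a, b). a \<noteq> 0 \<and> b \<noteq> 0})) \<and>
     (\<forall>i<m. \<forall>j<m. \<forall>k<m. c i j k \<noteq> 0 \<longrightarrow> max i j < k) \<and>
     d 0 = m \<and> d 1 = m \<and> (\<forall>i. d (Suc i) \<le> d i) \<and> d (Suc s) = 0 \<and>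
     (\<forall>i. \<forall>x\<in>Gsub m d i. \<forall>y\<in>Gsub m d i. mul x y \<in> Gsub m d i \<and> ginv m mul x \<in> Gsub m d i) \<and>
     (\<forall>i j. \<forall>x\<in>Gsub m d i. \<forall>y\<in>Gsub m d j. gcomm m mul x y \<in> Gsub m d (i + j)) \<and>
     (\<forall>x\<in>Gam m. \<forall>y\<in>Gam m. mul x y \<in> Gam m \<and> ginv m mul x \<in> Gam m)"

definition rat_height_le :: "real \<Rightarrow> real \<Rightarrow> bool" where
  "rat_height_le r C \<longleftrightarrow> (\<exists>a b::int. b > 0 \<and> coprime a b \<and> r = of_int a / of_int b \<and>
                             of_int (max \<bar>a\<bar> b) \<le> C)"

fun gderiv :: "((nat \<Rightarrow> real) \<Rightarrow> (nat \<Rightarrow> real) \<Rightarrow> (nat \<Rightarrow> real)) \<Rightarrow> ((nat \<Rightarrow> real) \<Rightarrow> (nat \<Rightarrow> real))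
               \<Rightarrow> int list \<Rightarrow> (int \<Rightarrow> (nat \<Rightarrow> real)) \<Rightarrow> int \<Rightarrow> (nat \<Rightarrow> real)" where
  "gderiv mul iv [] g = g"
| "gderiv mul iv (h # hs) g = gderiv mul iv hs (\<lambda>n. mul (g (n + h)) (iv (g n)))"

definition polyseq :: "nat \<Rightarrow> ((nat \<Rightarrow> real) \<Rightarrow> (nat \<Rightarrow> real) \<Rightarrow> (nat \<Rightarrow> real)) \<Rightarrow> (nat \<Rightarrow> nat)
                       \<Rightarrow> (int \<Rightarrow> (nat \<Rightarrow> real)) \<Rightarrow> bool" where
  "polyseq m mul d g \<longleftrightarrow> (\<forall>hs n. gderiv mul (ginv m mul) hs g n \<in> Gsub m d (length hs))"

definition gnorm :: "nat \<Rightarrow> (nat \<Rightarrow> real) \<Rightarrow> real" where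
  "gnorm m x = Max (insert 0 ((\<lambda>k. \<bar>x k\<bar>) ` {..<m}))"

text \<open>Green--Tao metric on G: the largest metric with d(x,y) <= |psi(x y^-1)|.\<close>
definition distG :: "nat \<Rightarrow> ((nat \<Rightarrow> real) \<Rightarrow> (nat \<Rightarrow> real) \<Rightarrow> (nat \<Rightarrow> real))
                     \<Rightarrow> (nat \<Rightarrow> real) \<Rightarrow> (nat \<Rightarrow> real) \<Rightarrow> real" where
  "distG m mul x y = Inf {(\<Sum>i<n. min (gnorm m (mul (xs i) (ginv m mul (xs (Suc i)))))
                                     (gnorm m (mul (xs (Suc i)) (ginv m mul (xs i)))))
                          | n xs. xs 0 = x \<and> xs n = y \<and> (\<forall>i\<le>n. xs i \<in> Vm m)}"

definition distGG :: "nat \<Rightarrow> ((nat \<Rightarrow> real) \<Rightarrow> (nat \<Rightarrow> real) \<Rightarrow> (nat \<Rightarrow> real))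
                     \<Rightarrow> (nat \<Rightarrow> real) \<Rightarrow> (nat \<Rightarrow> real) \<Rightarrow> real" where
  "distGG m mul x y = Inf {distG m mul (mul x a) (mul y b) | a b. a \<in> Gam m \<and> b \<in> Gam m}"

definition nilseq :: "nat \<Rightarrow> real \<Rightarrow> (int \<Rightarrow> complex) \<Rightarrow> bool" where
  "nilseq s C \<psi> \<longleftrightarrow>
     (\<exists>m mul c d g F.
        malcev_model s m mul c d \<and> real m \<le> C \<and>
        (\<forall>i<m. \<forall>j<m. \<forall>k<m. rat_height_le (c i j k) C) \<and>
        polyseq m mul d g \<and>
        (\<forall>x\<in>Vm m. \<forall>a\<in>Gam m. F (mul x a) = F x) \<and>
        (\<exists>A B. 0 \<le> A \<and> 0 \<le> B \<and> A + B \<le> C \<and>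
               (\<forall>x\<in>Vm m. cmod (F x) \<le> A) \<and>
               (\<forall>x\<in>Vm m. \<forall>y\<in>Vm m. cmod (F x - F y) \<le> B * distGG m mul x y)) \<and>
        (\<forall>n. \<psi> n = F (g n)))"

definition GI :: "nat \<Rightarrow> bool" where
  "GI s \<longleftrightarrow> (\<forall>\<delta>>0. \<exists>C c. C > 0 \<and> c > 0 \<and>
     (\<forall>N::nat. \<forall>f::int \<Rightarrow> complex. (\<forall>n\<in>{1..int N}. cmod (f n) \<le> 1) \<longrightarrow>
        gowersU (s + 1) N f \<ge> \<delta> \<longrightarrow>
        (\<exists>\<psi>. nilseq s C \<psi> \<and> cmod (avgN N (\<lambda>n. f n * cnj (\<psi> n))) \<ge> c)))"

definition growth :: "(real \<Rightarrow> real) \<Rightarrow> bool" where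
  "growth \<Phi> \<longleftrightarrow> (\<forall>x y. 0 < x \<longrightarrow> x \<le> y \<longrightarrow> \<Phi> x \<le> \<Phi> y) \<and> (\<forall>x>0. x \<le> \<Phi> x)"

definition smeasurable :: "nat \<Rightarrow> (real \<Rightarrow> real) \<Rightarrow> nat \<Rightarrow> int set \<Rightarrow> bool" where
  "smeasurable s \<Phi> N E \<longleftrightarrow> E \<subseteq> {1..int N} \<and>
     (\<forall>M\<ge>1. \<exists>\<psi>. nilseq s (\<Phi> M) \<psi> \<and> (\<forall>n. \<psi> n \<in> complex_of_real ` {0..1}) \<and>
              L2N N (\<lambda>n. \<psi> n - complex_of_real (indicator E n)) \<le> 1 / M)"

definition sfactor :: "nat \<Rightarrow> nat \<Rightarrow> nat \<Rightarrow> (real \<Rightarrow> real) \<Rightarrow> int set set \<Rightarrow> bool" where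
  "sfactor s N M \<Phi> B \<longleftrightarrow> finite B \<and> \<Union>B = {1..int N} \<and> {} \<notin> B \<and>
     (\<forall>E\<in>B. \<forall>E'\<in>B. E \<noteq> E' \<longrightarrow> E \<inter> E' = {}) \<and> card B \<le> M \<and>
     (\<forall>E\<in>B. smeasurable s \<Phi> N E)"

definition condexp :: "int set set \<Rightarrow> (int \<Rightarrow> real) \<Rightarrow> int \<Rightarrow> real" where
  "condexp B f n = (\<Sum>E\<in>B. if n \<in> E then (\<Sum>m\<in>E. f m) / real (card E) else 0)"

definition refines :: "int set set \<Rightarrow> int set set \<Rightarrow> bool" where
  "refines B' B \<longleftrightarrow> (\<forall>E'\<in>B'. \<exists>E\<in>B. E' \<subseteq> E)"

end

theory Submission
  imports Defs
begin

(* Let B be an s-factor and f : [N] -> [0,1].  If the U^{s+1}[N]-norm of f - E(f|B) exceeds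
   eps, the inverse theorem GI(s) yields a nilsequence psi of bounded complexity C correlating
   with f - E(f|B) by some c0 > 0.  Cover the plane by squares of side w = c0/4 with a carefully
   chosen offset theta, and cut every cell of B by the sets {n : psi n lies in a given square}.
   The new partition B'' again consists of s-measurable sets: the indicator of a square,
   evaluated along psi, agrees with a Lipschitz cutoff of psi (itself a nilsequence, since
   nilsequences are closed under products and Lipschitz post-composition) except at those n
   where psi n is close to a square boundary, and theta is chosen so that these are rare at
   every scale.  Since psi is within 2w of a function constant on the cells of B'', the energy
   sum_n E(f|B'')^2 exceeds sum_n E(f|B)^2 by a fixed multiple of N.  Energy is at most N, so
   after boundedly many refinements the Gowers norm has dropped below eps. *)

section \<open>Interleaving two filtrations\<close>

text \<open>For a monotone a with a 0 = 0, lev a k is the unique i with a i \<le> k < a (Suc i).  When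
  a i counts the coordinates vanishing on the i-th subgroup, lev a k is the last level on which
  coordinate k is not forced to vanish.\<close>
definition lev :: "(nat \<Rightarrow> nat) \<Rightarrow> nat \<Rightarrow> nat" where
  "lev a k = (LEAST i. k < a (Suc i))"

lemma lev_props:
  assumes "mono a" "a 0 = 0" "k < a S"
  shows "a (lev a k) \<le> k" "k < a (Suc (lev a k))"
proof -
  have ex: "\<exists>i. k < a (Suc i)"
  proof (cases S)
    case 0 then show ?thesis using assms by simp
  next
    case (Suc j) then show ?thesis using assms by blast
  qed
  show "k < a (Suc (lev a k))" unfolding lev_def using ex by (rule LeastI_ex)
  show "a (lev a k) \<le> k"
  proof (cases "lev a k")
    case 0 then show ?thesis using assms by simp
  next
    case (Suc j)
    then have "j < lev a k" by simp
    then have "\<not> k < a (Suc j)" unfolding lev_def using not_less_Least by blast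
    then show ?thesis using Suc by simp
  qed
qed

lemma lev_iff:
  assumes "mono a" "a 0 = 0" "k < a S"
  shows "k < a i \<longleftrightarrow> lev a k < i"
proof
  assume "k < a i"
  show "lev a k < i"
  proof (rule ccontr)
    assume "\<not> lev a k < i"
    then have "a i \<le> a (lev a k)" using assms(1) by (simp add: monoD)
    then show False using lev_props(1)[OF assms] \<open>k < a i\<close> by simp
  qed
next
  assume "lev a k < i"
  then have "a (Suc (lev a k)) \<le> a i" using assms(1) by (simp add: monoD)
  then show "k < a i" using lev_props(2)[OF assms] by simp
qed

text \<open>The product
  nilmanifold needs a Mal'cev basis adapted to the product filtration d1 + d2, so the
  coordinates of the two factors are interleaved level by level: first the coordinates of
  level 0 of both factors, then those of level 1, and so on.\<close>
locale filtration_pair =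
  fixes m1 m2 :: nat and d1 d2 :: "nat \<Rightarrow> nat" and s :: nat
  assumes d1_0: "d1 0 = m1" and d2_0: "d2 0 = m2"
    and d1_S: "\<And>i. d1 (Suc i) \<le> d1 i" and d2_S: "\<And>i. d2 (Suc i) \<le> d2 i"
    and d1_s: "d1 (Suc s) = 0" and d2_s: "d2 (Suc s) = 0"
begin

text \<open>a1 i is the number of coordinates of the first factor that vanish on its i-th subgroup.\<close>
definition a1 :: "nat \<Rightarrow> nat" where "a1 i = m1 - d1 i"
definition a2 :: "nat \<Rightarrow> nat" where "a2 i = m2 - d2 i"

lemma d1_anti: "i \<le> j \<Longrightarrow> d1 j \<le> d1 i"
  using lift_Suc_antimono_le[of d1] d1_S by blast
lemma d2_anti: "i \<le> j \<Longrightarrow> d2 j \<le> d2 i"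
  using lift_Suc_antimono_le[of d2] d2_S by blast

lemma mono_a1: "mono a1" unfolding mono_def a1_def using d1_anti by (simp add: diff_le_mono2)
lemma mono_a2: "mono a2" unfolding mono_def a2_def using d2_anti by (simp add: diff_le_mono2)
lemma a1_0: "a1 0 = 0" by (simp add: a1_def d1_0)
lemma a2_0: "a2 0 = 0" by (simp add: a2_def d2_0)
lemma a1_S: "a1 (Suc s) = m1" by (simp add: a1_def d1_s)
lemma a2_S: "a2 (Suc s) = m2" by (simp add: a2_def d2_s)
lemma d1_le: "d1 i \<le> m1" using d1_anti[of 0 i] d1_0 by simp
lemma d2_le: "d2 i \<le> m2" using d2_anti[of 0 i] d2_0 by simp

definition pos1 :: "nat \<Rightarrow> nat" where "pos1 k = k + a2 (lev a1 k)"
definition pos2 :: "nat \<Rightarrow> nat" where "pos2 k = k + a1 (Suc (lev a2 k))"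

lemma lev1_iff: "k < m1 \<Longrightarrow> k < a1 i \<longleftrightarrow> lev a1 k < i"
  using lev_iff[OF mono_a1 a1_0, of k "Suc s"] a1_S by simp
lemma lev2_iff: "k < m2 \<Longrightarrow> k < a2 i \<longleftrightarrow> lev a2 k < i"
  using lev_iff[OF mono_a2 a2_0, of k "Suc s"] a2_S by simp

lemma pos1_lt: "k < m1 \<Longrightarrow> pos1 k < a1 i + a2 i \<longleftrightarrow> k < a1 i"
proof
  assume k: "k < m1" and "pos1 k < a1 i + a2 i"
  show "k < a1 i"
  proof (rule ccontr)
    assume "\<not> k < a1 i"
    then have "a2 i \<le> a2 (lev a1 k)" using lev1_iff[OF k] mono_a2 by (simp add: monoD)
    then show False using \<open>pos1 k < a1 i + a2 i\<close> \<open>\<not> k < a1 i\<close> unfolding pos1_def by simp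
  qed
next
  assume k: "k < m1" and "k < a1 i"
  then have "a2 (lev a1 k) \<le> a2 i" using lev1_iff mono_a2 by (simp add: monoD)
  then show "pos1 k < a1 i + a2 i" using \<open>k < a1 i\<close> unfolding pos1_def by simp
qed

lemma pos2_lt: "k < m2 \<Longrightarrow> pos2 k < a1 i + a2 i \<longleftrightarrow> k < a2 i"
proof
  assume k: "k < m2" and "pos2 k < a1 i + a2 i"
  show "k < a2 i"
  proof (rule ccontr)
    assume "\<not> k < a2 i"
    then have "a1 i \<le> a1 (Suc (lev a2 k))" using lev2_iff[OF k] mono_a1 by (simp add: monoD)
    then show False using \<open>pos2 k < a1 i + a2 i\<close> \<open>\<not> k < a2 i\<close> unfolding pos2_def by simp
  qed
next
  assume k: "k < m2" and "k < a2 i"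
  then have "a1 (Suc (lev a2 k)) \<le> a1 i" using lev2_iff mono_a1 by (simp add: monoD)
  then show "pos2 k < a1 i + a2 i" using \<open>k < a2 i\<close> unfolding pos2_def by simp
qed

lemma pos1_m: "k < m1 \<Longrightarrow> pos1 k < m1 + m2"
  using pos1_lt[of k "Suc s"] a1_S a2_S by simp
lemma pos2_m: "k < m2 \<Longrightarrow> pos2 k < m1 + m2"
  using pos2_lt[of k "Suc s"] a1_S a2_S by simp

lemma pos_disj: "k < m1 \<Longrightarrow> k' < m2 \<Longrightarrow> pos1 k \<noteq> pos2 k'"
proof
  assume k: "k < m1" and k': "k' < m2" and eq: "pos1 k = pos2 k'"
  define i where "i = lev a1 k"
  have "k < a1 (Suc i)" using lev1_iff[OF k] i_def by simp
  then have "k' < a2 (Suc i)" using pos1_lt[OF k] pos2_lt[OF k'] eq by metis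
  then have "lev a2 k' \<le> i" using lev2_iff[OF k'] by simp
  have "\<not> k < a1 i" using lev1_iff[OF k] i_def by simp
  then have "\<not> k' < a2 i" using pos1_lt[OF k] pos2_lt[OF k'] eq by metis
  then have "lev a2 k' = i" using lev2_iff[OF k'] \<open>lev a2 k' \<le> i\<close> by simp
  then have "pos2 k' = k' + a1 (Suc i)" unfolding pos2_def by simp
  moreover have "pos1 k = k + a2 i" unfolding pos1_def i_def by simp
  ultimately show False using eq \<open>k < a1 (Suc i)\<close> \<open>\<not> k' < a2 i\<close> by simp
qed

lemma pos_disj': "k < m1 \<Longrightarrow> k' < m2 \<Longrightarrow> pos2 k' \<noteq> pos1 k"
  using pos_disj by metis

lemma pos1_mono: "k < k' \<Longrightarrow> k' < m1 \<Longrightarrow> pos1 k < pos1 k'"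
proof -
  assume kk: "k < k'" "k' < m1"
  have "lev a1 k \<le> lev a1 k'"
  proof (rule ccontr)
    assume "\<not> ?thesis"
    then have "k' < a1 (lev a1 k)" using lev1_iff kk by simp
    moreover have "\<not> k < a1 (lev a1 k)" using lev1_iff kk by simp
    ultimately show False using kk by simp
  qed
  then have "a2 (lev a1 k) \<le> a2 (lev a1 k')" using mono_a2 by (simp add: monoD)
  then show ?thesis using kk unfolding pos1_def by simp
qed

lemma pos2_mono: "k < k' \<Longrightarrow> k' < m2 \<Longrightarrow> pos2 k < pos2 k'"
proof -
  assume kk: "k < k'" "k' < m2"
  have "lev a2 k \<le> lev a2 k'"
  proof (rule ccontr)
    assume "\<not> ?thesis"
    then have "k' < a2 (lev a2 k)" using lev2_iff kk by simp
    moreover have "\<not> k < a2 (lev a2 k)" using lev2_iff kk by simp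
    ultimately show False using kk by simp
  qed
  then have "a1 (Suc (lev a2 k)) \<le> a1 (Suc (lev a2 k'))" using mono_a1 by (simp add: monoD)
  then show ?thesis using kk unfolding pos2_def by simp
qed

lemma inj1: "inj_on pos1 {..<m1}"
  by (rule inj_onI) (metis lessThan_iff linorder_cases pos1_mono less_irrefl)
lemma inj2: "inj_on pos2 {..<m2}"
  by (rule inj_onI) (metis lessThan_iff linorder_cases pos2_mono less_irrefl)

lemma cover: "pos1 ` {..<m1} \<union> pos2 ` {..<m2} = {..<m1 + m2}"
proof (rule card_subset_eq)
  show "pos1 ` {..<m1} \<union> pos2 ` {..<m2} \<subseteq> {..<m1 + m2}" using pos1_m pos2_m by auto
  have "pos1 ` {..<m1} \<inter> pos2 ` {..<m2} = {}" using pos_disj by blast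
  then have "card (pos1 ` {..<m1} \<union> pos2 ` {..<m2}) = card (pos1 ` {..<m1}) + card (pos2 ` {..<m2})"
    by (simp add: card_Un_disjoint)
  also have "\<dots> = m1 + m2" using inj1 inj2 by (simp add: card_image)
  finally show "card (pos1 ` {..<m1} \<union> pos2 ` {..<m2}) = card {..<m1 + m2}" by simp
qed simp

abbreviation "I1 \<equiv> pos1 ` {..<m1}"
abbreviation "I2 \<equiv> pos2 ` {..<m2}"

lemma notI2: "k < m1 \<Longrightarrow> pos1 k \<notin> I2" using pos_disj by auto
lemma notI1: "k < m2 \<Longrightarrow> pos2 k \<notin> I1" using pos_disj' by auto

lemma pos_cases:
  assumes "p < m1 + m2"
  obtains k where "k < m1" "p = pos1 k" | k where "k < m2" "p = pos2 k"
  using cover assms by blast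

definition inv1 :: "nat \<Rightarrow> nat" where "inv1 = the_inv_into {..<m1} pos1"
definition inv2 :: "nat \<Rightarrow> nat" where "inv2 = the_inv_into {..<m2} pos2"

lemma inv1_pos1[simp]: "k < m1 \<Longrightarrow> inv1 (pos1 k) = k"
  unfolding inv1_def using the_inv_into_f_f[OF inj1] by simp
lemma inv2_pos2[simp]: "k < m2 \<Longrightarrow> inv2 (pos2 k) = k"
  unfolding inv2_def using the_inv_into_f_f[OF inj2] by simp
lemma inv1_lt: "p \<in> I1 \<Longrightarrow> inv1 p < m1" by auto
lemma inv2_lt: "p \<in> I2 \<Longrightarrow> inv2 p < m2" by auto
lemma pos1_inv1: "p \<in> I1 \<Longrightarrow> pos1 (inv1 p) = p" by auto
lemma pos2_inv2: "p \<in> I2 \<Longrightarrow> pos2 (inv2 p) = p" by auto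

end

section \<open>Groups in Mal'cev coordinates\<close>

definition grp :: "nat \<Rightarrow> ((nat \<Rightarrow> real) \<Rightarrow> (nat \<Rightarrow> real) \<Rightarrow> (nat \<Rightarrow> real)) \<Rightarrow> bool" where
  "grp m mul \<longleftrightarrow>
     (\<forall>x\<in>Vm m. \<forall>y\<in>Vm m. mul x y \<in> Vm m) \<and>
     (\<forall>x\<in>Vm m. \<forall>y\<in>Vm m. \<forall>z\<in>Vm m. mul (mul x y) z = mul x (mul y z)) \<and>
     (\<forall>x\<in>Vm m. mul gid x = x \<and> mul x gid = x) \<and>
     (\<forall>x\<in>Vm m. \<exists>y\<in>Vm m. mul x y = gid \<and> mul y x = gid)"

lemma gid_Vm[simp]: "gid \<in> Vm m" by (simp add: gid_def Vm_def)
lemma gid_Gam: "gid \<in> Gam m" unfolding Gam_def gid_def Vm_def by simp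
lemma ecoord_Vm: "k < m \<Longrightarrow> ecoord k t \<in> Vm m" unfolding ecoord_def Vm_def by simp

lemma grp_closed: "grp m mul \<Longrightarrow> x \<in> Vm m \<Longrightarrow> y \<in> Vm m \<Longrightarrow> mul x y \<in> Vm m"
  unfolding grp_def by blast
lemma grp_assoc: "grp m mul \<Longrightarrow> x \<in> Vm m \<Longrightarrow> y \<in> Vm m \<Longrightarrow> z \<in> Vm m \<Longrightarrow>
    mul (mul x y) z = mul x (mul y z)"
  unfolding grp_def by blast
lemma grp_idl: "grp m mul \<Longrightarrow> x \<in> Vm m \<Longrightarrow> mul gid x = x"
  unfolding grp_def by blast
lemma grp_idr: "grp m mul \<Longrightarrow> x \<in> Vm m \<Longrightarrow> mul x gid = x"
  unfolding grp_def by blast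

lemma ginv_unique:
  assumes G: "grp m mul" and x: "x \<in> Vm m" and y: "y \<in> Vm m" and xy: "mul x y = gid"
  shows "ginv m mul x = y"
  unfolding ginv_def
proof (rule the_equality)
  show "y \<in> Vm m \<and> mul x y = gid" using y xy by simp
  obtain z where z: "z \<in> Vm m" "mul z x = gid" using G x unfolding grp_def by blast
  have right_inv: "y' = z" if y': "y' \<in> Vm m" "mul x y' = gid" for y'
  proof -
    have "y' = mul (mul z x) y'" using G y' z by (simp add: grp_idl)
    also have "\<dots> = mul z (mul x y')" using G z(1) x y'(1) by (rule grp_assoc)
    also have "\<dots> = z" using G z(1) y'(2) by (simp add: grp_idr)
    finally show ?thesis .
  qed
  fix y' assume "y' \<in> Vm m \<and> mul x y' = gid"
  then show "y' = y" using right_inv y xy by metis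
qed

lemma ginv_props:
  assumes "grp m mul" "x \<in> Vm m"
  shows "ginv m mul x \<in> Vm m" "mul x (ginv m mul x) = gid" "mul (ginv m mul x) x = gid"
proof -
  obtain z where z: "z \<in> Vm m" "mul x z = gid" "mul z x = gid" using assms unfolding grp_def by blast
  then show "ginv m mul x \<in> Vm m" "mul x (ginv m mul x) = gid" "mul (ginv m mul x) x = gid"
    using ginv_unique[OF assms z(1,2)] by auto
qed

lemma ginv_gid: "grp m mul \<Longrightarrow> ginv m mul gid = gid"
  using ginv_unique[of m mul gid gid] grp_idl by simp

lemma gcomm_Vm: "grp m mul \<Longrightarrow> x \<in> Vm m \<Longrightarrow> y \<in> Vm m \<Longrightarrow> gcomm m mul x y \<in> Vm m"
  unfolding gcomm_def by (simp add: grp_closed ginv_props)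

lemma gcomm_gid1: "grp m mul \<Longrightarrow> y \<in> Vm m \<Longrightarrow> gcomm m mul gid y = gid"
  unfolding gcomm_def by (simp add: grp_idl grp_idr ginv_gid ginv_props)
lemma gcomm_gid2: "grp m mul \<Longrightarrow> x \<in> Vm m \<Longrightarrow> gcomm m mul x gid = gid"
  unfolding gcomm_def by (simp add: grp_idl grp_idr ginv_gid ginv_props)

lemma hom_ginv:
  assumes G: "grp m mul" and G': "grp m' mul'" and V: "\<And>x. x \<in> Vm m \<Longrightarrow> \<pi> x \<in> Vm m'"
    and hom: "\<And>x y. x \<in> Vm m \<Longrightarrow> y \<in> Vm m \<Longrightarrow> \<pi> (mul x y) = mul' (\<pi> x) (\<pi> y)"
    and one: "\<pi> gid = gid" and x: "x \<in> Vm m"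
  shows "\<pi> (ginv m mul x) = ginv m' mul' (\<pi> x)"
proof (rule sym, rule ginv_unique[OF G' V[OF x] V])
  show "ginv m mul x \<in> Vm m" using ginv_props[OF G x] by simp
  show "mul' (\<pi> x) (\<pi> (ginv m mul x)) = gid"
    using hom[OF x, of "ginv m mul x"] ginv_props[OF G x] one by simp
qed

abbreviation coord_vars :: "nat \<Rightarrow> ((nat \<Rightarrow> real) \<times> (nat \<Rightarrow> real) \<Rightarrow> real) set" where
  "coord_vars m \<equiv> {\<lambda>(x, y). x j | j. j < m} \<union> {\<lambda>(x, y). y j | j. j < m}"

lemma malcev_grp: "malcev_model s m mul c d \<Longrightarrow> grp m mul"
  unfolding malcev_model_def grp_def by (elim conjE) (intro conjI; assumption)

context
  fixes s m mul c d
  assumes M: "malcev_model s m mul c d"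
begin

lemma mm_poly:
  assumes "k < m"
  shows "\<exists>p. polyfn (coord_vars m) p \<and> (\<forall>x\<in>Vm m. \<forall>y\<in>Vm m. mul x y k = p (x, y))"
proof -
  have "\<forall>k<m. \<exists>p. polyfn (coord_vars m) p \<and> (\<forall>x\<in>Vm m. \<forall>y\<in>Vm m. mul x y k = p (x, y))"
    using M unfolding malcev_model_def by (elim conjE) assumption
  then show ?thesis using assms by blast
qed
lemma mm_ecoord:
  assumes "i < m"
  shows "mul (ecoord i a) (ecoord i b) = ecoord i (a + b)"
proof -
  have "\<forall>i<m. \<forall>a b. mul (ecoord i a) (ecoord i b) = ecoord i (a + b)"
    using M unfolding malcev_model_def by (elim conjE) assumption
  then show ?thesis using assms by blast
qed
lemma mm_foldr:
  assumes "x \<in> Vm m"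
  shows "x = foldr (\<lambda>i acc. mul (ecoord i (x i)) acc) [0..<m] gid"
proof -
  have "\<forall>x\<in>Vm m. x = foldr (\<lambda>i acc. mul (ecoord i (x i)) acc) [0..<m] gid"
    using M unfolding malcev_model_def by (elim conjE) assumption
  then show ?thesis using assms by blast
qed
lemma mm_lim:
  assumes "i < m" and "j < m" and "k < m"
  shows "((\<lambda>(a, b). gcomm m mul (ecoord i a) (ecoord j b) k / (a * b)) \<longlongrightarrow> c i j k)
      (at (0, 0) within {(a, b). a \<noteq> 0 \<and> b \<noteq> 0})"
proof -
  have "\<forall>i<m. \<forall>j<m. \<forall>k<m.
      ((\<lambda>(a, b). gcomm m mul (ecoord i a) (ecoord j b) k / (a * b)) \<longlongrightarrow> c i j k)
        (at (0, 0) within {(a, b). a \<noteq> 0 \<and> b \<noteq> 0})"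
    using M unfolding malcev_model_def by (elim conjE) assumption
  then show ?thesis using assms by blast
qed
lemma mm_c:
  assumes "i < m" and "j < m" and "k < m" and "c i j k \<noteq> 0"
  shows "max i j < k"
proof -
  have "\<forall>i<m. \<forall>j<m. \<forall>k<m. c i j k \<noteq> 0 \<longrightarrow> max i j < k"
    using M unfolding malcev_model_def by (elim conjE) assumption
  then show ?thesis using assms by blast
qed
lemma mm_d: "d 0 = m" "d 1 = m" "d (Suc i) \<le> d i" "d (Suc s) = 0"
proof -
  have "d 0 = m \<and> d 1 = m \<and> (\<forall>i. d (Suc i) \<le> d i) \<and> d (Suc s) = 0"
    using M unfolding malcev_model_def by (elim conjE) ((intro conjI)?; assumption)
  then show "d 0 = m" "d 1 = m" "d (Suc i) \<le> d i" "d (Suc s) = 0" by blast+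
qed
lemma mm_Gsub:
  assumes "x \<in> Gsub m d i" and "y \<in> Gsub m d i"
  shows "mul x y \<in> Gsub m d i \<and> ginv m mul x \<in> Gsub m d i"
proof -
  have "\<forall>i. \<forall>x\<in>Gsub m d i. \<forall>y\<in>Gsub m d i. mul x y \<in> Gsub m d i \<and> ginv m mul x \<in> Gsub m d i"
    using M unfolding malcev_model_def by (elim conjE) assumption
  then show ?thesis using assms by blast
qed
lemma mm_comm:
  assumes "x \<in> Gsub m d i" and "y \<in> Gsub m d j"
  shows "gcomm m mul x y \<in> Gsub m d (i + j)"
proof -
  have "\<forall>i j. \<forall>x\<in>Gsub m d i. \<forall>y\<in>Gsub m d j. gcomm m mul x y \<in> Gsub m d (i + j)"
    using M unfolding malcev_model_def by (elim conjE) assumption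
  then show ?thesis using assms by blast
qed
lemma mm_Gam:
  assumes "x \<in> Gam m" and "y \<in> Gam m"
  shows "mul x y \<in> Gam m \<and> ginv m mul x \<in> Gam m"
proof -
  have "\<forall>x\<in>Gam m. \<forall>y\<in>Gam m. mul x y \<in> Gam m \<and> ginv m mul x \<in> Gam m"
    using M unfolding malcev_model_def by (elim conjE) assumption
  then show ?thesis using assms by blast
qed
end

section \<open>Products of Mal'cev models\<close>

lemma polyfn_comp:
  assumes "polyfn V p" "\<And>v. v \<in> V \<Longrightarrow> (\<lambda>z. v (h z)) \<in> V'"
  shows "polyfn V' (\<lambda>z. p (h z))"
  using assms(1)
proof (induction rule: polyfn.induct)
  case (pconst a) then show ?case by (rule polyfn.pconst)
next
  case (pvar v) then show ?case using assms(2) by (simp add: polyfn.pvar)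
next
  case (padd p q) then show ?case using polyfn.padd by blast
next
  case (pmul p q) then show ?case using polyfn.pmul by blast
qed

lemma polyfn_restrict:
  assumes p: "polyfn (coord_vars m') p" and \<sigma>: "\<And>j. j < m' \<Longrightarrow> \<sigma> j < m"
  shows "polyfn (coord_vars m)
           (\<lambda>(x, y). p (\<lambda>k. if k < m' then x (\<sigma> k) else 0, \<lambda>k. if k < m' then y (\<sigma> k) else 0))"
proof -
  let ?h = "\<lambda>(x::nat \<Rightarrow> real, y::nat \<Rightarrow> real).
              (\<lambda>k. if k < m' then x (\<sigma> k) else 0, \<lambda>k. if k < m' then y (\<sigma> k) else 0)"
  have "polyfn (coord_vars m) (\<lambda>z. p (?h z))"
  proof (rule polyfn_comp[OF p])
    fix v assume "v \<in> coord_vars m'"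
    then obtain j where j: "j < m'" "v = (\<lambda>(x, y). x j) \<or> v = (\<lambda>(x, y). y j)" by blast
    then have "(\<lambda>z. v (?h z)) = (\<lambda>(x, y). x (\<sigma> j)) \<or> (\<lambda>z. v (?h z)) = (\<lambda>(x, y). y (\<sigma> j))"
      by (auto intro!: ext)
    then show "(\<lambda>z. v (?h z)) \<in> coord_vars m" using \<sigma>[OF j(1)] by blast
  qed
  then show ?thesis by (simp add: case_prod_beta')
qed

lemma foldr_Vm:
  assumes "grp m mul" "\<forall>k\<in>set L. k < m"
  shows "foldr (\<lambda>k acc. mul (ecoord k (f k)) acc) L gid \<in> Vm m"
  using assms(2) by (induction L) (simp_all add: grp_closed[OF assms(1)] ecoord_Vm)

context filtration_pair begin

definition split1 :: "(nat \<Rightarrow> real) \<Rightarrow> (nat \<Rightarrow> real)" where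
  "split1 x = (\<lambda>k. if k < m1 then x (pos1 k) else 0)"
definition split2 :: "(nat \<Rightarrow> real) \<Rightarrow> (nat \<Rightarrow> real)" where
  "split2 x = (\<lambda>k. if k < m2 then x (pos2 k) else 0)"
definition comb :: "(nat \<Rightarrow> real) \<Rightarrow> (nat \<Rightarrow> real) \<Rightarrow> (nat \<Rightarrow> real)" where
  "comb u v = (\<lambda>p. if p \<in> I1 then u (inv1 p) else if p \<in> I2 then v (inv2 p) else 0)"

lemma comb_pos1: "k < m1 \<Longrightarrow> comb u v (pos1 k) = u k"
  unfolding comb_def by simp
lemma comb_pos2: "k < m2 \<Longrightarrow> comb u v (pos2 k) = v k"
  unfolding comb_def using notI1 by simp

lemma comb_Vm[simp]: "comb u v \<in> Vm (m1 + m2)"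
  unfolding Vm_def comb_def using pos1_m pos2_m by fastforce
lemma split1_Vm[simp]: "split1 x \<in> Vm m1" unfolding Vm_def split1_def by simp
lemma split2_Vm[simp]: "split2 x \<in> Vm m2" unfolding Vm_def split2_def by simp

lemma split1_comb[simp]: "u \<in> Vm m1 \<Longrightarrow> split1 (comb u v) = u"
  unfolding split1_def by (rule ext) (auto simp: comb_pos1 Vm_def)
lemma split2_comb[simp]: "v \<in> Vm m2 \<Longrightarrow> split2 (comb u v) = v"
  unfolding split2_def by (rule ext) (auto simp: comb_pos2 Vm_def)

lemma Vm_eqI:
  assumes "x \<in> Vm (m1 + m2)" "y \<in> Vm (m1 + m2)" "split1 x = split1 y" "split2 x = split2 y"
  shows "x = y"
proof
  fix p show "x p = y p"
  proof (cases "p < m1 + m2")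
    case True
    then show ?thesis
    proof (cases rule: pos_cases)
      case (1 k) then show ?thesis using fun_cong[OF assms(3), of k] unfolding split1_def by simp
    next
      case (2 k) then show ?thesis using fun_cong[OF assms(4), of k] unfolding split2_def by simp
    qed
  next
    case False then show ?thesis using assms(1,2) unfolding Vm_def by simp
  qed
qed

lemma comb_split[simp]: "x \<in> Vm (m1 + m2) \<Longrightarrow> comb (split1 x) (split2 x) = x"
  by (rule Vm_eqI) simp_all

lemma split1_gid[simp]: "split1 gid = gid" unfolding split1_def gid_def by auto
lemma split2_gid[simp]: "split2 gid = gid" unfolding split2_def gid_def by auto
lemma comb_gid: "comb gid gid = gid" by (rule Vm_eqI) simp_all

lemma split1_ecoord1: "k < m1 \<Longrightarrow> split1 (ecoord (pos1 k) t) = ecoord k t"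
  unfolding split1_def ecoord_def by (rule ext) (auto dest: inj_onD[OF inj1])
lemma split2_ecoord1: "k < m1 \<Longrightarrow> split2 (ecoord (pos1 k) t) = gid"
  unfolding split2_def ecoord_def gid_def using pos_disj' by (auto intro!: ext)
lemma split1_ecoord2: "k < m2 \<Longrightarrow> split1 (ecoord (pos2 k) t) = gid"
  unfolding split1_def ecoord_def gid_def using pos_disj by (auto intro!: ext)
lemma split2_ecoord2: "k < m2 \<Longrightarrow> split2 (ecoord (pos2 k) t) = ecoord k t"
  unfolding split2_def ecoord_def by (rule ext) (auto dest: inj_onD[OF inj2])

lemma ecoord_pos1: "k < m1 \<Longrightarrow> ecoord (pos1 k) t = comb (ecoord k t) gid"
  by (rule Vm_eqI) (simp_all add: ecoord_Vm pos1_m split1_ecoord1 split2_ecoord1)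
lemma ecoord_pos2: "k < m2 \<Longrightarrow> ecoord (pos2 k) t = comb gid (ecoord k t)"
  by (rule Vm_eqI) (simp_all add: ecoord_Vm pos2_m split1_ecoord2 split2_ecoord2)

definition mulP :: "((nat \<Rightarrow> real) \<Rightarrow> (nat \<Rightarrow> real) \<Rightarrow> (nat \<Rightarrow> real)) \<Rightarrow>
   ((nat \<Rightarrow> real) \<Rightarrow> (nat \<Rightarrow> real) \<Rightarrow> (nat \<Rightarrow> real)) \<Rightarrow> (nat \<Rightarrow> real) \<Rightarrow> (nat \<Rightarrow> real) \<Rightarrow> (nat \<Rightarrow> real)" where
  "mulP mul1 mul2 x y = comb (mul1 (split1 x) (split1 y)) (mul2 (split2 x) (split2 y))"

definition cP :: "(nat \<Rightarrow> nat \<Rightarrow> nat \<Rightarrow> real) \<Rightarrow> (nat \<Rightarrow> nat \<Rightarrow> nat \<Rightarrow> real) \<Rightarrow> nat \<Rightarrow> nat \<Rightarrow> nat \<Rightarrow> real" where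
  "cP c1 c2 p q r = (if p \<in> I1 \<and> q \<in> I1 \<and> r \<in> I1 then c1 (inv1 p) (inv1 q) (inv1 r)
       else if p \<in> I2 \<and> q \<in> I2 \<and> r \<in> I2 then c2 (inv2 p) (inv2 q) (inv2 r) else 0)"

definition dP :: "nat \<Rightarrow> nat" where "dP i = d1 i + d2 i"

lemma mulP_Vm[simp]: "mulP mul1 mul2 x y \<in> Vm (m1 + m2)" unfolding mulP_def by simp

lemma split1_mulP: "grp m1 mul1 \<Longrightarrow> split1 (mulP mul1 mul2 x y) = mul1 (split1 x) (split1 y)"
  unfolding mulP_def by (simp add: grp_closed)
lemma split2_mulP: "grp m2 mul2 \<Longrightarrow> split2 (mulP mul1 mul2 x y) = mul2 (split2 x) (split2 y)"
  unfolding mulP_def by (simp add: grp_closed)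

context
  fixes mul1 mul2
  assumes g1: "grp m1 mul1" and g2: "grp m2 mul2"
begin

lemma grpP: "grp (m1 + m2) (mulP mul1 mul2)"
proof -
  have "mulP mul1 mul2 (mulP mul1 mul2 x y) z = mulP mul1 mul2 x (mulP mul1 mul2 y z)"
    if "x \<in> Vm (m1 + m2)" "y \<in> Vm (m1 + m2)" "z \<in> Vm (m1 + m2)" for x y z
    by (rule Vm_eqI)
       (simp_all add: split1_mulP[OF g1] split2_mulP[OF g2] grp_assoc[OF g1] grp_assoc[OF g2])
  moreover have "mulP mul1 mul2 gid x = x \<and> mulP mul1 mul2 x gid = x" if "x \<in> Vm (m1 + m2)" for x
    using that by (simp add: mulP_def grp_idl[OF g1] grp_idl[OF g2] grp_idr[OF g1] grp_idr[OF g2])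
  moreover have "\<exists>y\<in>Vm (m1 + m2). mulP mul1 mul2 x y = gid \<and> mulP mul1 mul2 y x = gid" for x
  proof (intro bexI conjI)
    let ?y = "comb (ginv m1 mul1 (split1 x)) (ginv m2 mul2 (split2 x))"
    show "?y \<in> Vm (m1 + m2)" by simp
    show "mulP mul1 mul2 x ?y = gid" "mulP mul1 mul2 ?y x = gid"
      unfolding mulP_def using ginv_props[OF g1, of "split1 x"] ginv_props[OF g2, of "split2 x"]
      by (simp_all add: Vm_eqI)
  qed
  ultimately show ?thesis unfolding grp_def by simp
qed

lemma split1_ginvP: "x \<in> Vm (m1 + m2) \<Longrightarrow> split1 (ginv (m1 + m2) (mulP mul1 mul2) x)
    = ginv m1 mul1 (split1 x)"
  by (rule hom_ginv[OF grpP g1]) (simp_all add: split1_mulP[OF g1])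
lemma split2_ginvP: "x \<in> Vm (m1 + m2) \<Longrightarrow> split2 (ginv (m1 + m2) (mulP mul1 mul2) x)
    = ginv m2 mul2 (split2 x)"
  by (rule hom_ginv[OF grpP g2]) (simp_all add: split2_mulP[OF g2])

lemma ginvP: "x \<in> Vm (m1 + m2) \<Longrightarrow>
    ginv (m1 + m2) (mulP mul1 mul2) x = comb (ginv m1 mul1 (split1 x)) (ginv m2 mul2 (split2 x))"
  by (rule Vm_eqI) (simp_all add: ginv_props[OF grpP] ginv_props[OF g1] ginv_props[OF g2]
                       split1_ginvP split2_ginvP)

lemma gcommP: "x \<in> Vm (m1 + m2) \<Longrightarrow> y \<in> Vm (m1 + m2) \<Longrightarrow>
    gcomm (m1 + m2) (mulP mul1 mul2) x y
        = comb (gcomm m1 mul1 (split1 x) (split1 y)) (gcomm m2 mul2 (split2 x) (split2 y))"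
  unfolding gcomm_def
  by (rule Vm_eqI) (simp_all add: split1_mulP[OF g1] split2_mulP[OF g2] split1_ginvP split2_ginvP
                     grp_closed[OF g1] grp_closed[OF g2] ginv_props[OF g1] ginv_props[OF g2])

text \<open>The product of Mal'cev coordinate systems is again one: the coordinate word of the
  product is the shuffle of the coordinate words of the factors, and factors commute.\<close>
lemma foldr_prod:
  assumes L: "\<forall>p\<in>set L. p < m1 + m2"
  shows "foldr (\<lambda>i acc. mulP mul1 mul2 (ecoord i (x i)) acc) L gid =
    comb (foldr (\<lambda>k acc. mul1 (ecoord k (split1 x k)) acc) (map inv1 (filter (\<lambda>p. p \<in> I1) L)) gid)
         (foldr (\<lambda>k acc. mul2 (ecoord k (split2 x k)) acc) (map inv2 (filter (\<lambda>p. p \<in> I2) L)) gid)"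
  using L
proof (induction L)
  case Nil then show ?case by (simp add: comb_gid)
next
  case (Cons i L)
  let ?U = "foldr (\<lambda>k acc. mul1 (ecoord k (split1 x k)) acc) (map inv1 (filter (\<lambda>p. p \<in> I1) L)) gid"
  let ?V = "foldr (\<lambda>k acc. mul2 (ecoord k (split2 x k)) acc) (map inv2 (filter (\<lambda>p. p \<in> I2) L)) gid"
  have U: "?U \<in> Vm m1" by (rule foldr_Vm[OF g1]) auto
  have V: "?V \<in> Vm m2" by (rule foldr_Vm[OF g2]) auto
  have IH: "foldr (\<lambda>i acc. mulP mul1 mul2 (ecoord i (x i)) acc) L gid = comb ?U ?V" using Cons by simp
  have "i < m1 + m2" using Cons by simp
  then show ?case
  proof (cases rule: pos_cases)
    case (1 k)
    then have "ecoord i (x i) = comb (ecoord k (split1 x k)) gid"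
        by (simp add: ecoord_pos1 split1_def)
    then have "mulP mul1 mul2 (ecoord i (x i)) (comb ?U ?V)
        = comb (mul1 (ecoord k (split1 x k)) ?U) ?V"
      unfolding mulP_def using 1 U V by (simp add: ecoord_Vm grp_idl[OF g2])
    then show ?thesis using 1 notI2 IH by simp
  next
    case (2 k)
    then have "ecoord i (x i) = comb gid (ecoord k (split2 x k))"
        by (simp add: ecoord_pos2 split2_def)
    then have "mulP mul1 mul2 (ecoord i (x i)) (comb ?U ?V)
        = comb ?U (mul2 (ecoord k (split2 x k)) ?V)"
      unfolding mulP_def using 2 U V by (simp add: ecoord_Vm grp_idl[OF g1])
    then show ?thesis using 2 notI1 IH by simp
  qed
qed

end

lemma filter1: "filter (\<lambda>p. p \<in> I1) [0..<m1 + m2] = map pos1 [0..<m1]"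
proof (rule sorted_distinct_set_unique)
  show "sorted (map pos1 [0..<m1])"
    unfolding sorted_wrt_iff_nth_less by (auto intro: less_imp_le pos1_mono)
  show "distinct (map pos1 [0..<m1])" using inj1 by (simp add: distinct_map lessThan_atLeast0)
  show "set (filter (\<lambda>p. p \<in> I1) [0..<m1 + m2]) = set (map pos1 [0..<m1])" using pos1_m by auto
qed (simp_all add: sorted_wrt_filter)

lemma filter2: "filter (\<lambda>p. p \<in> I2) [0..<m1 + m2] = map pos2 [0..<m2]"
proof (rule sorted_distinct_set_unique)
  show "sorted (map pos2 [0..<m2])"
    unfolding sorted_wrt_iff_nth_less by (auto intro: less_imp_le pos2_mono)
  show "distinct (map pos2 [0..<m2])" using inj2 by (simp add: distinct_map lessThan_atLeast0)
  show "set (filter (\<lambda>p. p \<in> I2) [0..<m1 + m2]) = set (map pos2 [0..<m2])" using pos2_m by auto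
qed (simp_all add: sorted_wrt_filter)

lemma map_inv1: "map inv1 (map pos1 [0..<m1]) = [0..<m1]"
  by (simp only: map_map) (rule map_idI, auto)
lemma map_inv2: "map inv2 (map pos2 [0..<m2]) = [0..<m2]"
  by (simp only: map_map) (rule map_idI, auto)

lemma Gsub_char: "x \<in> Gsub (m1 + m2) dP i \<longleftrightarrow>
    x \<in> Vm (m1 + m2) \<and> split1 x \<in> Gsub m1 d1 i \<and> split2 x \<in> Gsub m2 d2 i"
proof -
  have e: "m1 + m2 - dP i = a1 i + a2 i" unfolding dP_def a1_def a2_def
      using d1_le[of i] d2_le[of i] by simp
  have a1l: "a1 i \<le> m1" and a2l: "a2 i \<le> m2" unfolding a1_def a2_def by simp_all
  have vanish: "(\<forall>p < a1 i + a2 i. x p = 0) \<longleftrightarrow>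
      (\<forall>k < a1 i. split1 x k = 0) \<and> (\<forall>k < a2 i. split2 x k = 0)"
  proof safe
    fix p assume p: "p < a1 i + a2 i" and A: "\<forall>k<a1 i. split1 x k = 0" "\<forall>k<a2 i. split2 x k = 0"
    then have "p < m1 + m2" using a1l a2l by simp
    then show "x p = 0"
    proof (cases rule: pos_cases)
      case (1 k) then show ?thesis using A(1) pos1_lt[of k i] p unfolding split1_def by force
    next
      case (2 k) then show ?thesis using A(2) pos2_lt[of k i] p unfolding split2_def by force
    qed
  qed (use pos1_lt pos2_lt a1l a2l in \<open>auto simp: split1_def split2_def\<close>)
  have "x \<in> Gsub (m1 + m2) dP i \<longleftrightarrow> x \<in> Vm (m1 + m2) \<and> (\<forall>p < a1 i + a2 i. x p = 0)"
    unfolding Gsub_def e by simp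
  moreover have "split1 x \<in> Gsub m1 d1 i \<longleftrightarrow> (\<forall>k < a1 i. split1 x k = 0)"
    unfolding Gsub_def a1_def by simp
  moreover have "split2 x \<in> Gsub m2 d2 i \<longleftrightarrow> (\<forall>k < a2 i. split2 x k = 0)"
    unfolding Gsub_def a2_def by simp
  ultimately show ?thesis using vanish by blast
qed

lemma Gam_char: "x \<in> Gam (m1 + m2) \<longleftrightarrow> x \<in> Vm (m1 + m2) \<and> split1 x \<in> Gam m1 \<and> split2 x \<in> Gam m2"
proof
  assume "x \<in> Gam (m1 + m2)"
  then show "x \<in> Vm (m1 + m2) \<and> split1 x \<in> Gam m1 \<and> split2 x \<in> Gam m2"
    unfolding Gam_def by (auto simp: split1_def split2_def Vm_def)
next
  assume A: "x \<in> Vm (m1 + m2) \<and> split1 x \<in> Gam m1 \<and> split2 x \<in> Gam m2"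
  have "x p \<in> \<int>" for p
  proof (cases "p < m1 + m2")
    case True then show ?thesis
    proof (cases rule: pos_cases)
      case (1 k)
      have "split1 x k \<in> \<int>" using A unfolding Gam_def by blast
      then show ?thesis using 1 by (simp add: split1_def)
    next
      case (2 k)
      have "split2 x k \<in> \<int>" using A unfolding Gam_def by blast
      then show ?thesis using 2 by (simp add: split2_def)
    qed
  next
    case False then show ?thesis using A unfolding Vm_def by simp
  qed
  then show "x \<in> Gam (m1 + m2)" using A unfolding Gam_def by simp
qed

context
  fixes mul1 mul2 c1 c2
  assumes M1: "malcev_model s m1 mul1 c1 d1" and M2: "malcev_model s m2 mul2 c2 d2"
begin

lemma grp1: "grp m1 mul1" using malcev_grp[OF M1] .
lemma grp2: "grp m2 mul2" using malcev_grp[OF M2] .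

lemma mulP_poly:
  assumes k: "k < m1 + m2"
  shows "\<exists>p. polyfn (coord_vars (m1 + m2)) p \<and>
           (\<forall>x\<in>Vm (m1 + m2). \<forall>y\<in>Vm (m1 + m2). mulP mul1 mul2 x y k = p (x, y))"
  using k
proof (cases rule: pos_cases)
  case (1 k')
  obtain p where p: "polyfn (coord_vars m1) p" "\<forall>x\<in>Vm m1. \<forall>y\<in>Vm m1. mul1 x y k' = p (x, y)"
    using mm_poly[OF M1] 1 by blast
  show ?thesis
    using polyfn_restrict[OF p(1), of pos1 "m1 + m2"] pos1_m p(2) 1
    by (intro exI[of _ "\<lambda>(x, y). p (split1 x, split1 y)"])
       (simp add: mulP_def comb_pos1 split1_def split1_Vm[unfolded split1_def])
next
  case (2 k')
  obtain p where p: "polyfn (coord_vars m2) p" "\<forall>x\<in>Vm m2. \<forall>y\<in>Vm m2. mul2 x y k' = p (x, y)"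
    using mm_poly[OF M2] 2 by blast
  show ?thesis
    using polyfn_restrict[OF p(1), of pos2 "m1 + m2"] pos2_m p(2) 2
    by (intro exI[of _ "\<lambda>(x, y). p (split2 x, split2 y)"])
       (simp add: mulP_def comb_pos2 split2_def split2_Vm[unfolded split2_def])
qed

lemma mulP_ecoord:
  assumes "i < m1 + m2" shows "mulP mul1 mul2 (ecoord i a) (ecoord i b) = ecoord i (a + b)"
  using assms
proof (cases rule: pos_cases)
  case (1 k) then show ?thesis
    using mm_ecoord[OF M1] by (simp add: ecoord_pos1 mulP_def ecoord_Vm grp_idl[OF grp2])
next
  case (2 k) then show ?thesis
    using mm_ecoord[OF M2] by (simp add: ecoord_pos2 mulP_def ecoord_Vm grp_idl[OF grp1])
qed

lemma mulP_foldr: "x \<in> Vm (m1 + m2) \<Longrightarrow>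
    x = foldr (\<lambda>i acc. mulP mul1 mul2 (ecoord i (x i)) acc) [0..<m1 + m2] gid"
  using foldr_prod[OF grp1 grp2, of "[0..<m1 + m2]" x] mm_foldr[OF M1 split1_Vm]
    mm_foldr[OF M2 split2_Vm]
  unfolding filter1 filter2 map_inv1 map_inv2 by simp

text \<open>Commutators of basis elements of different factors are trivial, so the structure
  constants of the product are those of the factors, and zero across factors.\<close>
lemma mulP_comm_limit:
  assumes p: "p < m1 + m2" and q: "q < m1 + m2" and r: "r < m1 + m2"
  shows "((\<lambda>(a, b). gcomm (m1 + m2) (mulP mul1 mul2) (ecoord p a) (ecoord q b) r / (a * b))
            \<longlongrightarrow> cP c1 c2 p q r)
           (at (0, 0) within {(a, b). a \<noteq> 0 \<and> b \<noteq> 0})"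
proof -
  let ?F = "at (0::real, 0::real) within {(a, b). a \<noteq> 0 \<and> b \<noteq> 0}"
  let ?G = "\<lambda>a b. gcomm (m1 + m2) (mulP mul1 mul2) (ecoord p a) (ecoord q b)"
  have gc: "?G a b = comb (gcomm m1 mul1 (split1 (ecoord p a)) (split1 (ecoord q b)))
                          (gcomm m2 mul2 (split2 (ecoord p a)) (split2 (ecoord q b)))" for a b
    using gcommP[OF grp1 grp2] p q by (simp add: ecoord_Vm)
  have zero: "((\<lambda>(a::real, b::real). gid k / (a * b)) \<longlongrightarrow> 0) ?F" for k
  proof -
    have "(\<lambda>(a::real, b::real). gid k / (a * b)) = (\<lambda>_. 0)" by (auto simp: gid_def)
    then show ?thesis by simp
  qed
  note gcid = gcomm_gid1[OF grp1] gcomm_gid2[OF grp1] gcomm_gid1[OF grp2] gcomm_gid2[OF grp2]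
  have disj: "I1 \<inter> I2 = {}" using pos_disj by blast
  consider (one) i j where "i < m1" "j < m1" "p = pos1 i" "q = pos1 j"
    | (two) i j where "i < m2" "j < m2" "p = pos2 i" "q = pos2 j"
    | (mixed) "(p \<in> I1 \<and> q \<in> I2) \<or> (p \<in> I2 \<and> q \<in> I1)"
    using p q by (metis pos_cases image_eqI lessThan_iff)
  then show ?thesis
  proof cases
    case one
    then have e: "?G a b = comb (gcomm m1 mul1 (ecoord i a) (ecoord j b)) gid" for a b
      using gc by (simp add: split1_ecoord1 split2_ecoord1 gcid ecoord_Vm)
    from r show ?thesis
    proof (cases rule: pos_cases)
      case (1 k) then show ?thesis unfolding e using one mm_lim[OF M1, of i j k]
          by (simp add: comb_pos1 cP_def)
    next
      case (2 k) then show ?thesis unfolding e using one notI1 notI2 zero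
          by (simp add: comb_pos2 cP_def)
    qed
  next
    case two
    then have e: "?G a b = comb gid (gcomm m2 mul2 (ecoord i a) (ecoord j b))" for a b
      using gc by (simp add: split1_ecoord2 split2_ecoord2 gcid ecoord_Vm)
    from r show ?thesis
    proof (cases rule: pos_cases)
      case (2 k) then show ?thesis unfolding e using two notI1 mm_lim[OF M2, of i j k]
          by (simp add: comb_pos2 cP_def)
    next
      case (1 k) then show ?thesis unfolding e using two notI1 notI2 zero
          by (simp add: comb_pos1 cP_def)
    qed
  next
    case mixed
    then have "?G a b = gid" for a b
      using gc by (auto simp: split1_ecoord1 split2_ecoord1 split1_ecoord2 split2_ecoord2
                              gcid ecoord_Vm comb_gid)
    moreover have "cP c1 c2 p q r = 0" using mixed disj unfolding cP_def by auto
    ultimately show ?thesis using zero[of r] by simp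
  qed
qed

lemma cP_triangular:
  assumes "i < m1 + m2" "j < m1 + m2" "k < m1 + m2" "cP c1 c2 i j k \<noteq> 0"
  shows "max i j < k"
proof (cases "i \<in> I1 \<and> j \<in> I1 \<and> k \<in> I1")
  case True
  then have "c1 (inv1 i) (inv1 j) (inv1 k) \<noteq> 0" using assms(4) unfolding cP_def by simp
  then have "max (inv1 i) (inv1 j) < inv1 k" using mm_c[OF M1] True inv1_lt by blast
  then have "pos1 (inv1 i) < pos1 (inv1 k)" "pos1 (inv1 j) < pos1 (inv1 k)"
    using pos1_mono True inv1_lt by auto
  then show ?thesis using True pos1_inv1 by simp
next
  case False
  then have T: "i \<in> I2 \<and> j \<in> I2 \<and> k \<in> I2" and "c2 (inv2 i) (inv2 j) (inv2 k) \<noteq> 0"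
    using assms(4) unfolding cP_def by (auto split: if_splits)
  then have "max (inv2 i) (inv2 j) < inv2 k" using mm_c[OF M2] inv2_lt by blast
  then have "pos2 (inv2 i) < pos2 (inv2 k)" "pos2 (inv2 j) < pos2 (inv2 k)"
    using pos2_mono T inv2_lt by auto
  then show ?thesis using T pos2_inv2 by simp
qed

lemma mulP_Gsub:
  assumes x: "x \<in> Gsub (m1 + m2) dP i" and y: "y \<in> Gsub (m1 + m2) dP i"
  shows "mulP mul1 mul2 x y \<in> Gsub (m1 + m2) dP i
      \<and> ginv (m1 + m2) (mulP mul1 mul2) x \<in> Gsub (m1 + m2) dP i"
proof -
  have xs: "x \<in> Vm (m1 + m2)" "split1 x \<in> Gsub m1 d1 i" "split2 x \<in> Gsub m2 d2 i"
    and ys: "split1 y \<in> Gsub m1 d1 i" "split2 y \<in> Gsub m2 d2 i"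
    using x y Gsub_char by auto
  have "mul1 (split1 x) (split1 y) \<in> Gsub m1 d1 i \<and> ginv m1 mul1 (split1 x) \<in> Gsub m1 d1 i"
    using mm_Gsub[OF M1] xs ys by blast
  moreover have "mul2 (split2 x) (split2 y) \<in> Gsub m2 d2 i \<and> ginv m2 mul2 (split2 x) \<in> Gsub m2 d2 i"
    using mm_Gsub[OF M2] xs ys by blast
  ultimately show ?thesis
    unfolding Gsub_char using xs
    by (simp add: split1_mulP[OF grp1] split2_mulP[OF grp2] split1_ginvP[OF grp1 grp2]
                  split2_ginvP[OF grp1 grp2] ginv_props[OF grpP[OF grp1 grp2]])
qed

lemma mulP_comm_Gsub:
  assumes x: "x \<in> Gsub (m1 + m2) dP i" and y: "y \<in> Gsub (m1 + m2) dP j"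
  shows "gcomm (m1 + m2) (mulP mul1 mul2) x y \<in> Gsub (m1 + m2) dP (i + j)"
proof -
  have xs: "x \<in> Vm (m1 + m2)" "split1 x \<in> Gsub m1 d1 i" "split2 x \<in> Gsub m2 d2 i"
    and ys: "y \<in> Vm (m1 + m2)" "split1 y \<in> Gsub m1 d1 j" "split2 y \<in> Gsub m2 d2 j"
    using x y Gsub_char by auto
  have "gcomm m1 mul1 (split1 x) (split1 y) \<in> Gsub m1 d1 (i + j)" using mm_comm[OF M1] xs ys by blast
  moreover have "gcomm m2 mul2 (split2 x) (split2 y) \<in> Gsub m2 d2 (i + j)"
      using mm_comm[OF M2] xs ys by blast
  ultimately show ?thesis
    unfolding Gsub_char using xs ys
        by (simp add: gcommP[OF grp1 grp2] gcomm_Vm[OF grp1] gcomm_Vm[OF grp2])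
qed

lemma mulP_Gam:
  assumes x: "x \<in> Gam (m1 + m2)" and y: "y \<in> Gam (m1 + m2)"
  shows "mulP mul1 mul2 x y \<in> Gam (m1 + m2) \<and> ginv (m1 + m2) (mulP mul1 mul2) x \<in> Gam (m1 + m2)"
proof -
  have xs: "x \<in> Vm (m1 + m2)" "split1 x \<in> Gam m1" "split2 x \<in> Gam m2"
    and ys: "split1 y \<in> Gam m1" "split2 y \<in> Gam m2"
    using x y Gam_char by auto
  have "mul1 (split1 x) (split1 y) \<in> Gam m1 \<and> ginv m1 mul1 (split1 x) \<in> Gam m1"
    using mm_Gam[OF M1] xs ys by blast
  moreover have "mul2 (split2 x) (split2 y) \<in> Gam m2 \<and> ginv m2 mul2 (split2 x) \<in> Gam m2"
    using mm_Gam[OF M2] xs ys by blast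
  ultimately show ?thesis
    unfolding Gam_char using xs
    by (simp add: split1_mulP[OF grp1] split2_mulP[OF grp2] split1_ginvP[OF grp1 grp2]
                  split2_ginvP[OF grp1 grp2] ginv_props[OF grpP[OF grp1 grp2]])
qed

theorem malcev_prod: "malcev_model s (m1 + m2) (mulP mul1 mul2) (cP c1 c2) dP"
proof -
  let ?m = "m1 + m2" and ?mul = "mulP mul1 mul2"
  have G: "grp ?m ?mul" by (rule grpP[OF grp1 grp2])
  have D: "dP 0 = ?m \<and> dP 1 = ?m \<and> (\<forall>i. dP (Suc i) \<le> dP i) \<and> dP (Suc s) = 0"
    using mm_d[OF M1] mm_d[OF M2] unfolding dP_def by (simp add: add_mono)
  have P: "\<forall>k<?m. \<exists>p. polyfn (coord_vars ?m) p \<and> (\<forall>x\<in>Vm ?m. \<forall>y\<in>Vm ?m. ?mul x y k = p (x, y))"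
    using mulP_poly by blast
  have E: "\<forall>i<?m. \<forall>a b. ?mul (ecoord i a) (ecoord i b) = ecoord i (a + b)"
    using mulP_ecoord by blast
  have F: "\<forall>x\<in>Vm ?m. x = foldr (\<lambda>i acc. ?mul (ecoord i (x i)) acc) [0..<?m] gid"
    using mulP_foldr by blast
  have L: "\<forall>i<?m. \<forall>j<?m. \<forall>k<?m. ((\<lambda>(a, b). gcomm ?m ?mul (ecoord i a) (ecoord j b) k / (a * b))
           \<longlongrightarrow> cP c1 c2 i j k) (at (0, 0) within {(a, b). a \<noteq> 0 \<and> b \<noteq> 0})"
    using mulP_comm_limit by blast
  have T: "\<forall>i<?m. \<forall>j<?m. \<forall>k<?m. cP c1 c2 i j k \<noteq> 0 \<longrightarrow> max i j < k"
    using cP_triangular by blast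
  have S: "\<forall>i. \<forall>x\<in>Gsub ?m dP i. \<forall>y\<in>Gsub ?m dP i. ?mul x y \<in> Gsub ?m dP i
      \<and> ginv ?m ?mul x \<in> Gsub ?m dP i"
    using mulP_Gsub by blast
  have C: "\<forall>i j. \<forall>x\<in>Gsub ?m dP i. \<forall>y\<in>Gsub ?m dP j. gcomm ?m ?mul x y \<in> Gsub ?m dP (i + j)"
    using mulP_comm_Gsub by blast
  have Z: "\<forall>x\<in>Gam ?m. \<forall>y\<in>Gam ?m. ?mul x y \<in> Gam ?m \<and> ginv ?m ?mul x \<in> Gam ?m"
    using mulP_Gam by blast
  from G D P E F L T S C Z show ?thesis
    unfolding malcev_model_def grp_def by (elim conjE) (intro conjI; assumption)
qed
end
end

section \<open>The metric under projections\<close>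

lemma gnorm_nonneg: "0 \<le> gnorm m x"
  unfolding gnorm_def by (rule Max_ge) auto

lemma gnorm_ge: "k < m \<Longrightarrow> \<bar>x k\<bar> \<le> gnorm m x"
  unfolding gnorm_def by (rule Max_ge) auto

lemma distG_set_ne: "x \<in> Vm m \<Longrightarrow> y \<in> Vm m \<Longrightarrow>
  {(\<Sum>i<n. min (gnorm m (mul (xs i) (ginv m mul (xs (Suc i)))))
                 (gnorm m (mul (xs (Suc i)) (ginv m mul (xs i)))))
     | n xs. xs 0 = x \<and> xs n = y \<and> (\<forall>i\<le>n. xs i \<in> Vm m)} \<noteq> {}"
proof -
  assume x: "x \<in> Vm m" and y: "y \<in> Vm m"
  define xs where "xs = (\<lambda>i::nat. if i = 0 then x else y)"
  have "xs 0 = x \<and> xs 1 = y \<and> (\<forall>i\<le>1. xs i \<in> Vm m)" unfolding xs_def using x y by auto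
  then show ?thesis by blast
qed

lemma distG_nonneg: "x \<in> Vm m \<Longrightarrow> y \<in> Vm m \<Longrightarrow> 0 \<le> distG m mul x y"
  unfolding distG_def
  by (rule cInf_greatest[OF distG_set_ne]) (auto intro!: sum_nonneg simp: gnorm_nonneg)

text \<open>A multiplicative map \<pi> which does not increase the coordinate norm does not increase
  the metric on G: it maps every chain from x to y to a chain from \<pi> x to \<pi> y that is no
  longer.\<close>
lemma distG_hom_le:
  assumes G: "grp m mul" and G': "grp m' mul'" and V: "\<And>x. x \<in> Vm m \<Longrightarrow> \<pi> x \<in> Vm m'"
    and hom: "\<And>x y. x \<in> Vm m \<Longrightarrow> y \<in> Vm m \<Longrightarrow> \<pi> (mul x y) = mul' (\<pi> x) (\<pi> y)"
    and one: "\<pi> gid = gid" and nrm: "\<And>z. gnorm m' (\<pi> z) \<le> gnorm m z"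
    and x: "x \<in> Vm m" and y: "y \<in> Vm m"
  shows "distG m' mul' (\<pi> x) (\<pi> y) \<le> distG m mul x y"
  unfolding distG_def
proof (rule cInf_mono[OF distG_set_ne[OF x y]])
  let ?len = "\<lambda>m mul xs n. \<Sum>i<n. min (gnorm m (mul (xs i) (ginv m mul (xs (Suc i)))))
                                    (gnorm m (mul (xs (Suc i)) (ginv m mul (xs i))))"
  have step: "mul' (\<pi> u) (ginv m' mul' (\<pi> v))
      = \<pi> (mul u (ginv m mul v))" if "u \<in> Vm m" "v \<in> Vm m" for u v
  proof -
    have inv: "\<pi> (ginv m mul v) = ginv m' mul' (\<pi> v)"
      by (rule hom_ginv[OF G G' V hom one that(2)])
    have "\<pi> (mul u (ginv m mul v)) = mul' (\<pi> u) (\<pi> (ginv m mul v))"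
      using hom[OF that(1) ginv_props(1)[OF G that(2)]] .
    then show ?thesis unfolding inv by (rule sym)
  qed
  show "bdd_below {?len m' mul' xs n | n xs. xs 0 = \<pi> x \<and> xs n = \<pi> y \<and> (\<forall>i\<le>n. xs i \<in> Vm m')}"
    by (rule bdd_belowI[of _ 0]) (auto intro!: sum_nonneg simp: gnorm_nonneg)
  fix b assume "b \<in> {?len m mul xs n | n xs. xs 0 = x \<and> xs n = y \<and> (\<forall>i\<le>n. xs i \<in> Vm m)}"
  then obtain n xs where b: "b = ?len m mul xs n" and xs: "xs 0 = x" "xs n = y" "\<forall>i\<le>n. xs i \<in> Vm m"
    by blast
  have "?len m' mul' (\<lambda>i. \<pi> (xs i)) n \<le> b" unfolding b
  proof (rule sum_mono)
    fix i assume "i \<in> {..<n}"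
    then have "xs i \<in> Vm m" "xs (Suc i) \<in> Vm m" using xs(3) by auto
    then have "mul' (\<pi> (xs i)) (ginv m' mul' (\<pi> (xs (Suc i))))
        = \<pi> (mul (xs i) (ginv m mul (xs (Suc i))))"
      "mul' (\<pi> (xs (Suc i))) (ginv m' mul' (\<pi> (xs i))) = \<pi> (mul (xs (Suc i)) (ginv m mul (xs i)))"
      by (simp_all add: step)
    then show "min (gnorm m' (mul' (\<pi> (xs i)) (ginv m' mul' (\<pi> (xs (Suc i))))))
                   (gnorm m' (mul' (\<pi> (xs (Suc i))) (ginv m' mul' (\<pi> (xs i)))))
             \<le> min (gnorm m (mul (xs i) (ginv m mul (xs (Suc i)))))
                   (gnorm m (mul (xs (Suc i)) (ginv m mul (xs i))))"
      by (simp only:) (intro min.mono nrm)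
  qed
  moreover have "?len m' mul' (\<lambda>i. \<pi> (xs i)) n
      \<in> {?len m' mul' xs n | n xs. xs 0 = \<pi> x \<and> xs n = \<pi> y \<and> (\<forall>i\<le>n. xs i \<in> Vm m')}"
    using xs V by (intro CollectI exI[of _ n] exI[of _ "\<lambda>i. \<pi> (xs i)"]) simp
  ultimately show
    "\<exists>a\<in>{?len m' mul' xs n | n xs. xs 0 = \<pi> x \<and> xs n = \<pi> y \<and> (\<forall>i\<le>n. xs i \<in> Vm m')}. a \<le> b"
    by (rule bexI)
qed

lemma distGG_hom_le:
  assumes G: "grp m mul" and G': "grp m' mul'" and V: "\<And>x. x \<in> Vm m \<Longrightarrow> \<pi> x \<in> Vm m'"
    and hom: "\<And>x y. x \<in> Vm m \<Longrightarrow> y \<in> Vm m \<Longrightarrow> \<pi> (mul x y) = mul' (\<pi> x) (\<pi> y)"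
    and one: "\<pi> gid = gid" and nrm: "\<And>z. gnorm m' (\<pi> z) \<le> gnorm m z"
    and lat: "\<And>a. a \<in> Gam m \<Longrightarrow> \<pi> a \<in> Gam m'"
    and x: "x \<in> Vm m" and y: "y \<in> Vm m"
  shows "distGG m' mul' (\<pi> x) (\<pi> y) \<le> distGG m mul x y"
  unfolding distGG_def
proof (rule cInf_mono)
  show "{distG m mul (mul x a) (mul y b) |a b. a \<in> Gam m \<and> b \<in> Gam m} \<noteq> {}"
    using gid_Gam by blast
  have "mul' (\<pi> z) a \<in> Vm m'" if "z \<in> Vm m" "a \<in> Gam m'" for z a
    using that V grp_closed[OF G'] unfolding Gam_def by blast
  then show "bdd_below {distG m' mul' (mul' (\<pi> x) a) (mul' (\<pi> y) b) |a b. a \<in> Gam m' \<and> b \<in> Gam m'}"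
    using x y by (intro bdd_belowI[of _ 0]) (auto intro!: distG_nonneg)
  fix r assume "r \<in> {distG m mul (mul x a) (mul y b) |a b. a \<in> Gam m \<and> b \<in> Gam m}"
  then obtain a b where r: "r = distG m mul (mul x a) (mul y b)" and ab: "a \<in> Gam m" "b \<in> Gam m"
    by blast
  have a: "a \<in> Vm m" and b: "b \<in> Vm m" using ab unfolding Gam_def by auto
  have "distG m' mul' (\<pi> (mul x a)) (\<pi> (mul y b)) \<le> r"
    unfolding r
    by (rule distG_hom_le[OF G G' V hom one nrm grp_closed[OF G x a] grp_closed[OF G y b]])
  then have "distG m' mul' (mul' (\<pi> x) (\<pi> a)) (mul' (\<pi> y) (\<pi> b)) \<le> r"
    unfolding hom[OF x a] hom[OF y b] .
  then show "\<exists>t\<in>{distG m' mul' (mul' (\<pi> x) a) (mul' (\<pi> y) b) |a b. a \<in> Gam m' \<and> b \<in> Gam m'}. t \<le> r"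
    using lat ab by blast
qed

lemma polyseq_Vm: "polyseq m mul d g \<Longrightarrow> g n \<in> Vm m"
  using gderiv.simps(1) unfolding polyseq_def Gsub_def
      by (metis (no_types, lifting) list.size(3) mem_Collect_eq)

context filtration_pair begin

lemma gnorm_split1: "gnorm m1 (split1 z) \<le> gnorm (m1 + m2) z"
  unfolding gnorm_def[of m1]
  by (rule Max.boundedI) (auto simp: split1_def intro: gnorm_nonneg gnorm_ge[OF pos1_m])
lemma gnorm_split2: "gnorm m2 (split2 z) \<le> gnorm (m1 + m2) z"
  unfolding gnorm_def[of m2]
  by (rule Max.boundedI) (auto simp: split2_def intro: gnorm_nonneg gnorm_ge[OF pos2_m])

context
  fixes mul1 mul2
  assumes g1: "grp m1 mul1" and g2: "grp m2 mul2"
begin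

lemma distGG_split1: "x \<in> Vm (m1 + m2) \<Longrightarrow> y \<in> Vm (m1 + m2) \<Longrightarrow>
    distGG m1 mul1 (split1 x) (split1 y) \<le> distGG (m1 + m2) (mulP mul1 mul2) x y"
  by (rule distGG_hom_le[OF grpP[OF g1 g2] g1])
     (simp_all add: split1_mulP[OF g1] gnorm_split1 Gam_char)
lemma distGG_split2: "x \<in> Vm (m1 + m2) \<Longrightarrow> y \<in> Vm (m1 + m2) \<Longrightarrow>
    distGG m2 mul2 (split2 x) (split2 y) \<le> distGG (m1 + m2) (mulP mul1 mul2) x y"
  by (rule distGG_hom_le[OF grpP[OF g1 g2] g2])
     (simp_all add: split2_mulP[OF g2] gnorm_split2 Gam_char)

lemma gderiv_prod:
  "(\<forall>n. u n \<in> Vm m1) \<Longrightarrow> (\<forall>n. v n \<in> Vm m2) \<Longrightarrow>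
    gderiv (mulP mul1 mul2) (ginv (m1 + m2) (mulP mul1 mul2)) hs (\<lambda>n. comb (u n) (v n)) =
    (\<lambda>n. comb (gderiv mul1 (ginv m1 mul1) hs u n) (gderiv mul2 (ginv m2 mul2) hs v n))"
proof (induction hs arbitrary: u v)
  case Nil then show ?case by simp
next
  case (Cons h hs)
  have "(\<lambda>n. mulP mul1 mul2 (comb (u (n + h)) (v (n + h)))
                       (ginv (m1 + m2) (mulP mul1 mul2) (comb (u n) (v n))))
     = (\<lambda>n. comb (mul1 (u (n + h)) (ginv m1 mul1 (u n))) (mul2 (v (n + h)) (ginv m2 mul2 (v n))))"
    using Cons.prems by (simp add: mulP_def ginvP[OF g1 g2] ginv_props[OF g1] ginv_props[OF g2])
  moreover have "\<forall>n. mul1 (u (n + h)) (ginv m1 mul1 (u n)) \<in> Vm m1"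
    and "\<forall>n. mul2 (v (n + h)) (ginv m2 mul2 (v n)) \<in> Vm m2"
    using Cons.prems
    by (simp_all add: grp_closed[OF g1] grp_closed[OF g2] ginv_props[OF g1] ginv_props[OF g2])
  ultimately show ?case using Cons.IH by simp
qed

lemma polyseq_comb:
  assumes p1: "polyseq m1 mul1 d1 g1" and p2: "polyseq m2 mul2 d2 g2"
  shows "polyseq (m1 + m2) (mulP mul1 mul2) dP (\<lambda>n. comb (g1 n) (g2 n))"
  unfolding polyseq_def
proof (intro allI)
  fix hs n
  have a: "gderiv mul1 (ginv m1 mul1) hs g1 n \<in> Gsub m1 d1 (length hs)"
    and b: "gderiv mul2 (ginv m2 mul2) hs g2 n \<in> Gsub m2 d2 (length hs)"
    using p1 p2 unfolding polyseq_def by blast+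
  moreover have "gderiv mul1 (ginv m1 mul1) hs g1 n \<in> Vm m1"
    and "gderiv mul2 (ginv m2 mul2) hs g2 n \<in> Vm m2"
    using a b unfolding Gsub_def by simp_all
  ultimately show "gderiv (mulP mul1 mul2) (ginv (m1 + m2) (mulP mul1 mul2)) hs
      (\<lambda>n. comb (g1 n) (g2 n)) n
      \<in> Gsub (m1 + m2) dP (length hs)"
    unfolding gderiv_prod[OF allI[OF polyseq_Vm[OF p1]] allI[OF polyseq_Vm[OF p2]]] Gsub_char by simp
qed

lemma lipschitz_prod:
  assumes A1: "0 \<le> A1" "\<forall>x\<in>Vm m1. cmod (F1 x) \<le> A1"
    and L1: "\<forall>x\<in>Vm m1. \<forall>y\<in>Vm m1. cmod (F1 x - F1 y) \<le> B1 * distGG m1 mul1 x y" and B1: "0 \<le> B1"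
    and A2: "0 \<le> A2" "\<forall>x\<in>Vm m2. cmod (F2 x) \<le> A2"
    and L2: "\<forall>x\<in>Vm m2. \<forall>y\<in>Vm m2. cmod (F2 x - F2 y) \<le> B2 * distGG m2 mul2 x y" and B2: "0 \<le> B2"
    and x: "x \<in> Vm (m1 + m2)" and y: "y \<in> Vm (m1 + m2)"
  shows "cmod (F1 (split1 x) * F2 (split2 x) - F1 (split1 y) * F2 (split2 y))
           \<le> (A1 * B2 + A2 * B1) * distGG (m1 + m2) (mulP mul1 mul2) x y"
proof -
  let ?x1 = "split1 x" and ?x2 = "split2 x" and ?y1 = "split1 y" and ?y2 = "split2 y"
  let ?D = "distGG (m1 + m2) (mulP mul1 mul2) x y"
  have "F1 ?x1 * F2 ?x2 - F1 ?y1 * F2 ?y2 = F1 ?x1 * (F2 ?x2 - F2 ?y2) + F2 ?y2 * (F1 ?x1 - F1 ?y1)"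
    by (simp add: algebra_simps)
  then have "cmod (F1 ?x1 * F2 ?x2 - F1 ?y1 * F2 ?y2)
      \<le> cmod (F1 ?x1) * cmod (F2 ?x2 - F2 ?y2) + cmod (F2 ?y2) * cmod (F1 ?x1 - F1 ?y1)"
    by (metis norm_mult norm_triangle_ineq)
  also have "\<dots> \<le> A1 * (B2 * distGG m2 mul2 ?x2 ?y2) + A2 * (B1 * distGG m1 mul1 ?x1 ?y1)"
    using A1 A2 L1 L2 by (intro add_mono mult_mono) simp_all
  also have "\<dots> \<le> A1 * (B2 * ?D) + A2 * (B1 * ?D)"
    using A1 A2 B1 B2 distGG_split1[OF x y] distGG_split2[OF x y]
    by (intro add_mono mult_left_mono) simp_all
  finally show ?thesis by (simp add: algebra_simps)
qed

end

lemma cP_height: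
  assumes h1: "\<forall>i<m1. \<forall>j<m1. \<forall>k<m1. rat_height_le (c1 i j k) C"
    and h2: "\<forall>i<m2. \<forall>j<m2. \<forall>k<m2. rat_height_le (c2 i j k) C" and C: "1 \<le> C"
  shows "rat_height_le (cP c1 c2 i j k) C"
proof -
  have "rat_height_le 0 C" unfolding rat_height_le_def using C by (intro exI[of _ 0] exI[of _ 1]) simp
  then show ?thesis using h1 h2 inv1_lt inv2_lt unfolding cP_def by auto
qed

end

section \<open>The algebra of nilsequences\<close>

lemma rat_height_mono: "rat_height_le r C \<Longrightarrow> C \<le> C' \<Longrightarrow> rat_height_le r C'"
  unfolding rat_height_le_def by force

lemma nilseqI:
  assumes "malcev_model s m mul c d" "real m \<le> C" "\<forall>i<m. \<forall>j<m. \<forall>k<m. rat_height_le (c i j k) C"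
    "polyseq m mul d g" "\<forall>x\<in>Vm m. \<forall>a\<in>Gam m. F (mul x a) = F x"
    "0 \<le> A" "0 \<le> B" "A + B \<le> C" "\<forall>x\<in>Vm m. cmod (F x) \<le> A"
    "\<forall>x\<in>Vm m. \<forall>y\<in>Vm m. cmod (F x - F y) \<le> B * distGG m mul x y" "\<forall>n. \<psi> n = F (g n)"
  shows "nilseq s C \<psi>"
  unfolding nilseq_def
  by (rule exI[of _ m], rule exI[of _ mul], rule exI[of _ c], rule exI[of _ d], rule exI[of _ g],
      rule exI[of _ F], intro conjI exI[of _ A] exI[of _ B]) (use assms in simp_all)

lemma nilseqE:
  assumes "nilseq s C \<psi>"
  obtains m mul c d g F A B where "malcev_model s m mul c d" "real m \<le> C"
    "\<forall>i<m. \<forall>j<m. \<forall>k<m. rat_height_le (c i j k) C"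
    "polyseq m mul d g" "\<forall>x\<in>Vm m. \<forall>a\<in>Gam m. F (mul x a) = F x"
    "0 \<le> A" "0 \<le> B" "A + B \<le> C" "\<forall>x\<in>Vm m. cmod (F x) \<le> A"
    "\<forall>x\<in>Vm m. \<forall>y\<in>Vm m. cmod (F x - F y) \<le> B * distGG m mul x y" "\<forall>n. \<psi> n = F (g n)"
  using assms unfolding nilseq_def by (elim exE conjE) (rule that; assumption)

lemma nilseq_C_nonneg: "nilseq s C \<psi> \<Longrightarrow> 0 \<le> C"
  by (erule nilseqE) linarith

lemma nilseq_bound: "nilseq s C \<psi> \<Longrightarrow> cmod (\<psi> n) \<le> C"
proof (erule nilseqE)
  fix m mul c d g F A B
  assume p: "polyseq m mul d g" and AB: "0 \<le> B" "A + B \<le> C" and bd: "\<forall>x\<in>Vm m. cmod (F x) \<le> A"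
    and e: "\<forall>n. \<psi> n = F (g n)"
  have "cmod (\<psi> n) \<le> A" using bd polyseq_Vm[OF p] e by simp
  then show ?thesis using AB by linarith
qed

lemma nilseq_mono: "nilseq s C \<psi> \<Longrightarrow> C \<le> C' \<Longrightarrow> nilseq s C' \<psi>"
proof (erule nilseqE)
  fix m mul c d g F A B
  assume M: "malcev_model s m mul c d" and m: "real m \<le> C"
    and h: "\<forall>i<m. \<forall>j<m. \<forall>k<m. rat_height_le (c i j k) C"
    and p: "polyseq m mul d g" and Gi: "\<forall>x\<in>Vm m. \<forall>a\<in>Gam m. F (mul x a) = F x"
    and AB: "0 \<le> A" "0 \<le> B" "A + B \<le> C" and bd: "\<forall>x\<in>Vm m. cmod (F x) \<le> A"
    and L: "\<forall>x\<in>Vm m. \<forall>y\<in>Vm m. cmod (F x - F y) \<le> B * distGG m mul x y" and e: "\<forall>n. \<psi> n = F (g n)"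
    and CC: "C \<le> C'"
  have "\<forall>i<m. \<forall>j<m. \<forall>k<m. rat_height_le (c i j k) C'" using h CC rat_height_mono by blast
  then show ?thesis using m AB CC by (intro nilseqI[OF M _ _ p Gi AB(1,2) _ bd L e]) simp_all
qed

text \<open>Nilsequences are closed under multiplication: realise the product on the product
  nilmanifold, with the product of the two Lipschitz functions.\<close>
theorem nilseq_mult:
  assumes N1: "nilseq s C1 \<psi>1" and N2: "nilseq s C2 \<psi>2"
  shows "nilseq s (C1 + C2 + C1 * C2 + 1) (\<lambda>n. \<psi>1 n * \<psi>2 n)"
proof -
  obtain m1 mul1 c1 d1 g1 F1 A1 B1 where M1: "malcev_model s m1 mul1 c1 d1" and m1C: "real m1 \<le> C1"
    and h1: "\<forall>i<m1. \<forall>j<m1. \<forall>k<m1. rat_height_le (c1 i j k) C1"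
    and p1: "polyseq m1 mul1 d1 g1" and G1: "\<forall>x\<in>Vm m1. \<forall>a\<in>Gam m1. F1 (mul1 x a) = F1 x"
    and AB1: "0 \<le> A1" "0 \<le> B1" "A1 + B1 \<le> C1" and bd1: "\<forall>x\<in>Vm m1. cmod (F1 x) \<le> A1"
    and L1: "\<forall>x\<in>Vm m1. \<forall>y\<in>Vm m1. cmod (F1 x - F1 y) \<le> B1 * distGG m1 mul1 x y"
    and e1: "\<forall>n. \<psi>1 n = F1 (g1 n)"
    using N1 by (rule nilseqE)
  obtain m2 mul2 c2 d2 g2 F2 A2 B2 where M2: "malcev_model s m2 mul2 c2 d2" and m2C: "real m2 \<le> C2"
    and h2: "\<forall>i<m2. \<forall>j<m2. \<forall>k<m2. rat_height_le (c2 i j k) C2"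
    and p2: "polyseq m2 mul2 d2 g2" and G2: "\<forall>x\<in>Vm m2. \<forall>a\<in>Gam m2. F2 (mul2 x a) = F2 x"
    and AB2: "0 \<le> A2" "0 \<le> B2" "A2 + B2 \<le> C2" and bd2: "\<forall>x\<in>Vm m2. cmod (F2 x) \<le> A2"
    and L2: "\<forall>x\<in>Vm m2. \<forall>y\<in>Vm m2. cmod (F2 x - F2 y) \<le> B2 * distGG m2 mul2 x y"
    and e2: "\<forall>n. \<psi>2 n = F2 (g2 n)"
    using N2 by (rule nilseqE)
  interpret T: filtration_pair m1 m2 d1 d2 s
    using mm_d[OF M1] mm_d[OF M2] by unfold_locales auto
  have g1: "grp m1 mul1" and g2: "grp m2 mul2" using malcev_grp M1 M2 by blast+
  let ?C = "C1 + C2 + C1 * C2 + 1"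
  have "0 \<le> C1 * C2" using AB1 AB2 by simp
  then have CC: "C1 \<le> ?C" "C2 \<le> ?C" "1 \<le> ?C" "real (m1 + m2) \<le> ?C"
    using AB1 AB2 m1C m2C by linarith+
  define F where "F = (\<lambda>z. F1 (T.split1 z) * F2 (T.split2 z))"
  have "\<forall>i<m1. \<forall>j<m1. \<forall>k<m1. rat_height_le (c1 i j k) ?C"
    and "\<forall>i<m2. \<forall>j<m2. \<forall>k<m2. rat_height_le (c2 i j k) ?C"
    using h1 h2 CC rat_height_mono by blast+
  then have "\<forall>i<m1 + m2. \<forall>j<m1 + m2. \<forall>k<m1 + m2. rat_height_le (T.cP c1 c2 i j k) ?C"
    using CC(3) T.cP_height by blast
  moreover have "\<forall>x\<in>Vm (m1 + m2). \<forall>a\<in>Gam (m1 + m2). F (T.mulP mul1 mul2 x a) = F x"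
    using G1 G2 T.Gam_char unfolding F_def by (simp add: T.split1_mulP[OF g1] T.split2_mulP[OF g2])
  moreover have "\<forall>x\<in>Vm (m1 + m2). cmod (F x) \<le> A1 * A2"
    using bd1 bd2 AB1 AB2 unfolding F_def by (simp add: norm_mult mult_mono)
  moreover have "\<forall>x\<in>Vm (m1 + m2). \<forall>y\<in>Vm (m1 + m2).
      cmod (F x - F y) \<le> (A1 * B2 + A2 * B1) * distGG (m1 + m2) (T.mulP mul1 mul2) x y"
    unfolding F_def using T.lipschitz_prod[OF g1 g2] AB1 AB2 bd1 bd2 L1 L2 by blast
  moreover have "A1 * A2 + (A1 * B2 + A2 * B1) \<le> ?C"
  proof -
    have "A1 * A2 + (A1 * B2 + A2 * B1) \<le> (A1 + B1) * (A2 + B2)" using AB1 AB2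
        by (simp add: algebra_simps)
    also have "\<dots> \<le> C1 * C2" using AB1 AB2 by (intro mult_mono) simp_all
    finally show ?thesis using AB1 AB2 by linarith
  qed
  moreover have "\<forall>n. \<psi>1 n * \<psi>2 n = F (T.comb (g1 n) (g2 n))"
    unfolding F_def using e1 e2 polyseq_Vm[OF p1] polyseq_Vm[OF p2] by simp
  ultimately show ?thesis
    using T.malcev_prod[OF M1 M2] T.polyseq_comb[OF g1 g2 p1 p2] CC AB1 AB2
    by (intro nilseqI[where A = "A1 * A2" and B = "A1 * B2 + A2 * B1"
                        and g = "\<lambda>n. T.comb (g1 n) (g2 n)" and F = F])
       (simp_all add: mult_nonneg_nonneg)
qed

lemma nilseq_comp:
  assumes N: "nilseq s C \<psi>" and L: "0 \<le> L"
    and lip: "\<And>z w. \<bar>G z - G w\<bar> \<le> L * cmod (z - w)" and bd: "\<And>z. \<bar>G z\<bar> \<le> 1"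
  shows "nilseq s (C + L * C + 1) (\<lambda>n. complex_of_real (G (\<psi> n)))"
  using N
proof (rule nilseqE)
  fix m mul c d g F A B
  assume M: "malcev_model s m mul c d" "real m \<le> C" "\<forall>i<m. \<forall>j<m. \<forall>k<m. rat_height_le (c i j k) C"
    "polyseq m mul d g" and Gi: "\<forall>x\<in>Vm m. \<forall>a\<in>Gam m. F (mul x a) = F x"
    and AB: "0 \<le> A" "0 \<le> B" "A + B \<le> C"
    and LF: "\<forall>x\<in>Vm m. \<forall>y\<in>Vm m. cmod (F x - F y) \<le> B * distGG m mul x y" and e: "\<forall>n. \<psi> n = F (g n)"
  define F' where "F' = (\<lambda>x. complex_of_real (G (F x)))"
  have C0: "0 \<le> C" using AB by linarith
  have LB: "L * B \<le> L * C" using AB L by (intro mult_left_mono) simp_all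
  have "\<forall>x\<in>Vm m. \<forall>y\<in>Vm m. cmod (F' x - F' y) \<le> (L * B) * distGG m mul x y"
  proof (intro ballI)
    fix x y assume "x \<in> Vm m" "y \<in> Vm m"
    have "cmod (F' x - F' y) = \<bar>G (F x) - G (F y)\<bar>" unfolding F'_def
        by (metis norm_of_real of_real_diff)
    also have "\<dots> \<le> L * cmod (F x - F y)" by (rule lip)
    also have "\<dots> \<le> L * (B * distGG m mul x y)" using LF \<open>x \<in> Vm m\<close> \<open>y \<in> Vm m\<close> L
        by (simp add: mult_left_mono)
    finally show "cmod (F' x - F' y) \<le> (L * B) * distGG m mul x y" by (simp add: mult.assoc)
  qed
  moreover have CC: "C \<le> C + L * C + 1" using L C0 by simp
  moreover have "real m \<le> C + L * C + 1" using M(2) CC by linarith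
  moreover have "\<forall>i<m. \<forall>j<m. \<forall>k<m. rat_height_le (c i j k) (C + L * C + 1)"
    using M(3) CC rat_height_mono by blast
  ultimately show ?thesis
    using M(1,2,4) Gi e bd LB L AB
    by (intro nilseqI[where F = F' and A = 1 and B = "L * B"]) (auto simp: F'_def)
qed

section \<open>Lipschitz cutoffs of squares\<close>

definition clip :: "real \<Rightarrow> real \<Rightarrow> real" where
  "clip \<eta> t = max 0 (min 1 (t / \<eta> + 1 / 2))"

lemma clip_01: "0 \<le> clip \<eta> t" "clip \<eta> t \<le> 1" unfolding clip_def by auto

lemma clip_lip: "0 < \<eta> \<Longrightarrow> \<bar>clip \<eta> t - clip \<eta> t'\<bar> \<le> \<bar>t - t'\<bar> / \<eta>"
proof -
  assume e: "0 < \<eta>"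
  have clamp: "\<bar>max 0 (min 1 u) - max 0 (min 1 v)\<bar> \<le> \<bar>u - v\<bar>" for u v :: real
    by (cases "u \<le> 0"; cases "u \<le> 1"; cases "v \<le> 0"; cases "v \<le> 1") (auto simp: max_def min_def)
  have "\<bar>clip \<eta> t - clip \<eta> t'\<bar> \<le> \<bar>(t / \<eta> + 1/2) - (t' / \<eta> + 1/2)\<bar>"
    unfolding clip_def by (rule clamp)
  also have "\<dots> = \<bar>t - t'\<bar> / \<eta>" using e by (simp add: diff_divide_distrib[symmetric])
  finally show ?thesis .
qed

lemma clip_one: "0 < \<eta> \<Longrightarrow> \<eta> / 2 \<le> t \<Longrightarrow> clip \<eta> t = 1"
  unfolding clip_def by (simp add: field_simps min_def)

lemma clip_zero: "0 < \<eta> \<Longrightarrow> t \<le> - \<eta> / 2 \<Longrightarrow> clip \<eta> t = 0"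
  unfolding clip_def by (simp add: field_simps min_def max_def)

lemma prod01_lip:
  fixes a b a' b' :: real
  assumes "0 \<le> a" "a \<le> 1" "0 \<le> b" "b \<le> 1" "0 \<le> a'" "a' \<le> 1" "0 \<le> b'" "b' \<le> 1"
  shows "\<bar>a * b - a' * b'\<bar> \<le> \<bar>a - a'\<bar> + \<bar>b - b'\<bar>"
proof -
  have "a * b - a' * b' = a * (b - b') + b' * (a - a')" by (simp add: algebra_simps)
  then have "\<bar>a * b - a' * b'\<bar> \<le> \<bar>a\<bar> * \<bar>b - b'\<bar> + \<bar>b'\<bar> * \<bar>a - a'\<bar>"
    by (simp add: abs_mult[symmetric] abs_triangle_ineq)
  also have "\<dots> \<le> 1 * \<bar>b - b'\<bar> + 1 * \<bar>a - a'\<bar>" using assms by (intro add_mono mult_right_mono) simp_all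
  finally show ?thesis by simp
qed

text \<open>cellfun \<eta> w \<theta> j k is a Lipschitz bump approximating the indicator of the square
  [\<theta> + w j, \<theta> + w (j+1)) \<times> [\<theta> + w k, \<theta> + w (k+1)) in the complex plane.\<close>
definition cellfun :: "real \<Rightarrow> real \<Rightarrow> real \<Rightarrow> int \<Rightarrow> int \<Rightarrow> complex \<Rightarrow> real" where
  "cellfun \<eta> w \<theta> j k z = clip \<eta> (Re z - \<theta> - w * j) * clip \<eta> (\<theta> + w * (j + 1) - Re z) *
                          (clip \<eta> (Im z - \<theta> - w * k) * clip \<eta> (\<theta> + w * (k + 1) - Im z))"

lemma cellfun_01: "0 \<le> cellfun \<eta> w \<theta> j k z" "cellfun \<eta> w \<theta> j k z \<le> 1"
  unfolding cellfun_def using clip_01 by (simp_all add: mult_le_one)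

lemma cellfun_lip:
  assumes "0 < \<eta>"
  shows "\<bar>cellfun \<eta> w \<theta> j k z - cellfun \<eta> w \<theta> j k z'\<bar> \<le> (4 / \<eta>) * cmod (z - z')"
proof -
  have r: "\<bar>Re z - Re z'\<bar> \<le> cmod (z - z')" by (metis abs_Re_le_cmod minus_complex.simps(1))
  have i: "\<bar>Im z - Im z'\<bar> \<le> cmod (z - z')" by (metis abs_Im_le_cmod minus_complex.simps(2))
  have side: "\<bar>clip \<eta> (u - c) - clip \<eta> (u' - c)\<bar> \<le> cmod (z - z') / \<eta>"
    "\<bar>clip \<eta> (c - u) - clip \<eta> (c - u')\<bar> \<le> cmod (z - z') / \<eta>"
    if "\<bar>u - u'\<bar> \<le> cmod (z - z')" for u u' c
  proof -
    have "\<bar>clip \<eta> (u - c) - clip \<eta> (u' - c)\<bar> \<le> \<bar>u - u'\<bar> / \<eta>"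
        using clip_lip[OF assms, of "u - c" "u' - c"] by simp
    moreover have "\<bar>clip \<eta> (c - u) - clip \<eta> (c - u')\<bar> \<le> \<bar>u - u'\<bar> / \<eta>"
      using clip_lip[OF assms, of "c - u" "c - u'"] by (simp add: abs_minus_commute)
    moreover have "\<bar>u - u'\<bar> / \<eta> \<le> cmod (z - z') / \<eta>" using that assms by (simp add: divide_right_mono)
    ultimately show "\<bar>clip \<eta> (u - c) - clip \<eta> (u' - c)\<bar> \<le> cmod (z - z') / \<eta>"
      "\<bar>clip \<eta> (c - u) - clip \<eta> (c - u')\<bar> \<le> cmod (z - z') / \<eta>" by linarith+
  qed
  let ?a = "clip \<eta> (Re z - (\<theta> + w * j))" and ?a' = "clip \<eta> (Re z' - (\<theta> + w * j))"
  let ?b = "clip \<eta> (\<theta> + w * (j + 1) - Re z)" and ?b' = "clip \<eta> (\<theta> + w * (j + 1) - Re z')"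
  let ?c = "clip \<eta> (Im z - (\<theta> + w * k))" and ?c' = "clip \<eta> (Im z' - (\<theta> + w * k))"
  let ?d = "clip \<eta> (\<theta> + w * (k + 1) - Im z)" and ?d' = "clip \<eta> (\<theta> + w * (k + 1) - Im z')"
  have "\<bar>(?a * ?b) * (?c * ?d) - (?a' * ?b') * (?c' * ?d')\<bar> \<le> \<bar>?a * ?b - ?a' * ?b'\<bar>
      + \<bar>?c * ?d - ?c' * ?d'\<bar>"
    by (rule prod01_lip) (simp_all add: clip_01 mult_le_one)
  also have "\<dots> \<le> (\<bar>?a - ?a'\<bar> + \<bar>?b - ?b'\<bar>) + (\<bar>?c - ?c'\<bar> + \<bar>?d - ?d'\<bar>)"
    by (intro add_mono prod01_lip) (simp_all add: clip_01)
  also have "\<dots> \<le> 4 * (cmod (z - z') / \<eta>)" using side[OF r] side[OF i] by (smt (verit))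
  finally show ?thesis unfolding cellfun_def by (simp add: diff_diff_eq)
qed

lemma clip_pair:
  fixes y w :: real and a :: int
  assumes e: "0 < \<eta>" and w: "0 < w" and good: "\<forall>i::int. \<eta> / 2 \<le> \<bar>y - w * of_int i\<bar>"
  shows "clip \<eta> (y - w * of_int a) * clip \<eta> (w * (of_int a + 1) - y) = (if \<lfloor>y / w\<rfloor> = a then 1 else 0)"
proof -
  have step: "clip \<eta> t = (if 0 \<le> t then 1 else 0)" if "\<eta> / 2 \<le> \<bar>t\<bar>" for t
    using that clip_one[OF e] clip_zero[OF e] by (cases "0 \<le> t") auto
  have g1: "\<eta> / 2 \<le> \<bar>y - w * of_int a\<bar>" and g2: "\<eta> / 2 \<le> \<bar>w * (of_int a + 1) - y\<bar>"
    using good[rule_format, of a] good[rule_format, of "a + 1"] by (simp_all add: abs_minus_commute)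
  have g2': "0 \<le> w * (of_int a + 1) - y \<longleftrightarrow> y < w * (of_int a + 1)"
    using g2 e by auto
  have fl: "\<lfloor>y / w\<rfloor> = a \<longleftrightarrow> w * of_int a \<le> y \<and> y < w * (of_int a + 1)"
    using w by (simp add: floor_eq_iff field_simps)
  show ?thesis unfolding step[OF g1] step[OF g2] fl g2' by auto
qed

lemma cellfun_ind:
  assumes e: "0 < \<eta>" and w: "0 < w"
    and g1: "\<forall>i::int. \<eta> / 2 \<le> \<bar>Re z - \<theta> - w * of_int i\<bar>"
    and g2: "\<forall>i::int. \<eta> / 2 \<le> \<bar>Im z - \<theta> - w * of_int i\<bar>"
  shows "cellfun \<eta> w \<theta> a b z = (if \<lfloor>(Re z - \<theta>) / w\<rfloor> = a \<and> \<lfloor>(Im z - \<theta>) / w\<rfloor> = b then 1 else 0)"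
proof -
  have r: "clip \<eta> (Re z - \<theta> - w * of_int a) * clip \<eta> (\<theta> + w * (of_int a + 1) - Re z)
      = (if \<lfloor>(Re z - \<theta>) / w\<rfloor> = a then 1 else 0)"
    using clip_pair[OF e w g1, of a] by (simp add: algebra_simps)
  have i: "clip \<eta> (Im z - \<theta> - w * of_int b) * clip \<eta> (\<theta> + w * (of_int b + 1) - Im z)
      = (if \<lfloor>(Im z - \<theta>) / w\<rfloor> = b then 1 else 0)"
    using clip_pair[OF e w g2, of b] by (simp add: algebra_simps)
  show ?thesis unfolding cellfun_def using r i by simp
qed

section \<open>Choosing the offset of the grid\<close>

definition badset :: "real \<Rightarrow> ('a \<Rightarrow> real) \<Rightarrow> 'a set \<Rightarrow> real \<Rightarrow> real \<Rightarrow> 'a set" where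
  "badset w x S \<theta> r = {i \<in> S. \<exists>j::int. \<bar>x i - \<theta> - w * of_int j\<bar> < r}"

lemma badset_mono: "r \<le> r' \<Longrightarrow> badset w x S \<theta> r \<subseteq> badset w x S \<theta> r'"
  unfolding badset_def by (blast intro: order_less_le_trans)

lemma card_int_interval:
  fixes a b :: real assumes "a \<le> b"
  shows "real (card {z::int. a < of_int z \<and> of_int z < b}) \<le> b - a + 1"
proof -
  have sub: "{z::int. a < of_int z \<and> of_int z < b} \<subseteq> {\<lfloor>a\<rfloor> + 1 .. \<lceil>b\<rceil> - 1}"
  proof
    fix z assume "z \<in> {z::int. a < of_int z \<and> of_int z < b}"
    then have "\<lfloor>a\<rfloor> < z" "z < \<lceil>b\<rceil>" by (simp_all add: floor_less_iff less_ceiling_iff)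
    then show "z \<in> {\<lfloor>a\<rfloor> + 1 .. \<lceil>b\<rceil> - 1}" by simp
  qed
  have "card {z::int. a < of_int z \<and> of_int z < b} \<le> card {\<lfloor>a\<rfloor> + 1 .. \<lceil>b\<rceil> - 1}"
    by (rule card_mono[OF _ sub]) simp
  then have "real (card {z::int. a < of_int z \<and> of_int z < b}) \<le> max 0 (of_int \<lceil>b\<rceil> - 1 - of_int \<lfloor>a\<rfloor>)"
    by simp
  also have "\<dots> \<le> b - a + 1"
    using ceiling_correct[of b] floor_correct[of a] assms by (intro max.boundedI) linarith+
  finally show ?thesis .
qed

lemma grid_count:
  fixes x r w :: real and Q :: nat
  assumes Q: "0 < Q" and r: "0 < r" and w: "0 < w"
  shows "real (card {q \<in> {..<Q}. \<exists>j::int. \<bar>x - real q * w / Q - w * of_int j\<bar> < r})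
      \<le> 2 * r * Q / w + 1"
proof -
  let ?A = "{q \<in> {..<Q}. \<exists>j::int. \<bar>x - real q * w / Q - w * of_int j\<bar> < r}"
  define J where "J q = (SOME j::int. \<bar>x - real q * w / Q - w * of_int j\<bar> < r)" for q
  have J: "\<bar>x - real q * w / Q - w * of_int (J q)\<bar> < r" if "q \<in> ?A" for q
    using that unfolding J_def by (auto intro: someI_ex)
  define \<phi> where "\<phi> q = int q + int Q * J q" for q
  have inj: "inj_on \<phi> ?A"
  proof (rule inj_onI)
    fix q q' assume q: "q \<in> ?A" and q': "q' \<in> ?A" and e: "\<phi> q = \<phi> q'"
    have "int q mod int Q = int q' mod int Q" using e unfolding \<phi>_def by (metis mod_mult_self2)
    then show "q = q'" using q q' by simp
  qed
  let ?a = "x * Q / w - r * Q / w" and ?b = "x * Q / w + r * Q / w"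
  have img: "\<phi> ` ?A \<subseteq> {z::int. ?a < of_int z \<and> of_int z < ?b}"
  proof
    fix z assume "z \<in> \<phi> ` ?A"
    then obtain q where q: "q \<in> ?A" and z: "z = \<phi> q" by blast
    have "\<bar>x - real q * w / Q - w * of_int (J q)\<bar> * (Q / w) = \<bar>x * Q / w - of_int z\<bar>"
      unfolding z \<phi>_def using Q w by (simp add: abs_mult[symmetric] field_simps)
    moreover have "\<bar>x - real q * w / Q - w * of_int (J q)\<bar> * (Q / w) < r * (Q / w)"
      using J[OF q] Q w by (intro mult_strict_right_mono) simp_all
    ultimately have "\<bar>x * Q / w - of_int z\<bar> < r * Q / w" by simp
    then show "z \<in> {z::int. ?a < of_int z \<and> of_int z < ?b}" by (simp add: abs_less_iff)
  qed
  have "card ?A = card (\<phi> ` ?A)" using inj by (simp add: card_image)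
  also have "\<dots> \<le> card {z::int. ?a < of_int z \<and> of_int z < ?b}"
  proof (rule card_mono[OF _ img])
    have "{z::int. ?a < of_int z \<and> of_int z < ?b} \<subseteq> {\<lfloor>?a\<rfloor> .. \<lceil>?b\<rceil>}"
      by (auto simp: floor_le_iff le_ceiling_iff)
    then show "finite {z::int. ?a < of_int z \<and> of_int z < ?b}" by (rule finite_subset) simp
  qed
  finally have "real (card ?A) \<le> real (card {z::int. ?a < of_int z \<and> of_int z < ?b})" by simp
  also have "\<dots> \<le> ?b - ?a + 1" using Q r w by (intro card_int_interval) (simp add: field_simps)
  also have "\<dots> = 2 * r * Q / w + 1" by (simp add: field_simps)
  finally show ?thesis .
qed

lemma card_filter_sum: "finite S \<Longrightarrow> real (card {i \<in> S. P i}) = (\<Sum>i\<in>S. if P i then 1 else 0)"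
  by (simp add: sum.If_cases Collect_conj_eq Int_commute)

lemma double_count:
  fixes Q :: nat
  assumes S: "finite S" and Q: "0 < Q" and r: "0 < r" and w: "0 < w"
  shows "(\<Sum>q<Q. real (card (badset w x S (real q * w / Q) r))) \<le> real (card S) * (2 * r * Q / w + 1)"
proof -
  have "(\<Sum>q<Q. real (card (badset w x S (real q * w / Q) r)))
      = (\<Sum>q<Q. \<Sum>i\<in>S. if \<exists>j::int. \<bar>x i - real q * w / Q - w * of_int j\<bar> < r then 1 else 0)"
    unfolding badset_def using S by (simp add: card_filter_sum)
  also have "\<dots> = (\<Sum>i\<in>S. \<Sum>q<Q. if \<exists>j::int. \<bar>x i - real q * w / Q - w * of_int j\<bar> < r then 1 else 0)"
    by (rule sum.swap)
  also have "\<dots> = (\<Sum>i\<in>S. real (card {q \<in> {..<Q}. \<exists>j::int. \<bar>x i - real q * w / Q - w * of_int j\<bar> < r}))"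
    by (intro sum.cong refl, subst card_filter_sum) simp_all
  also have "\<dots> \<le> (\<Sum>i\<in>S. 2 * r * Q / w + 1)"
    by (rule sum_mono) (rule grid_count[OF Q r w])
  also have "\<dots> = real (card S) * (2 * r * Q / w + 1)" by simp
  finally show ?thesis .
qed

lemma markov_card:
  fixes f :: "'b \<Rightarrow> real"
  assumes "finite A" "\<And>q. q \<in> A \<Longrightarrow> 0 \<le> f q" "0 \<le> t"
  shows "real (card {q \<in> A. t < f q}) * t \<le> (\<Sum>q\<in>A. f q)"
proof -
  have "real (card {q \<in> A. t < f q}) * t = (\<Sum>q\<in>{q \<in> A. t < f q}. t)" by simp
  also have "\<dots> \<le> (\<Sum>q\<in>{q \<in> A. t < f q}. f q)" by (rule sum_mono) simp
  also have "\<dots> \<le> (\<Sum>q\<in>A. f q)" using assms by (intro sum_mono2) auto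
  finally show ?thesis .
qed

lemma bad_offsets:
  fixes Q :: nat
  assumes S: "finite S" and Q: "0 < Q" and w: "0 < w" and t: "0 < t"
  shows "real (card {q \<in> {..<Q}. t < real (card (badset w x S (real q * w / Q) (w / (16 * 4^j))))})
           \<le> real (card S) * (real Q / (8 * 4^j) + 1) / t"
proof -
  let ?r = "w / (16 * 4^j)"
  have "real (card {q \<in> {..<Q}. t < real (card (badset w x S (real q * w / Q) ?r))}) * t
      \<le> (\<Sum>q<Q. real (card (badset w x S (real q * w / Q) ?r)))"
    using t by (intro markov_card) simp_all
  also have "\<dots> \<le> real (card S) * (2 * ?r * Q / w + 1)"
      by (rule double_count[OF S Q _ w]) (use w in simp)
  also have "2 * ?r * Q / w = real Q / (8 * 4^j)" using w by (simp add: field_simps)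
  finally show ?thesis using t by (simp add: field_simps)
qed

text \<open>The counting budget for the union bound in good_offset_index.\<close>
lemma offset_budget:
  fixes n :: nat
  defines "Q \<equiv> 2 * (2^n + 2 * n) + 1"
  shows "(\<Sum>j<n. real Q / 8 * (1/2)^j + 2^j) + (real Q / 4 + 2 * real n) < real Q"
proof -
  have "(\<Sum>j<n. real Q / 8 * (1/2)^j + 2^j) = real Q / 8 * (\<Sum>j<n. (1/2)^j) + (\<Sum>j<n. 2^j)"
    by (simp add: sum.distrib sum_distrib_left)
  also have "\<dots> = real Q / 8 * (2 - 2 * (1/2)^n) + (2^n - 1)" by (simp add: sum_gp_strict)
  also have "\<dots> \<le> real Q / 4 + (2^n - 1)"
  proof -
    have "0 \<le> real Q / 8 * (2 * (1/2)^n)" by simp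
    then show ?thesis by (simp add: right_diff_distrib)
  qed
  finally have "(\<Sum>j<n. real Q / 8 * (1/2)^j + 2^j) \<le> real Q / 4 + (2^n - 1)" .
  moreover have "real Q = 2 * (2^n + 2 * real n) + 1" unfolding Q_def by simp
  ultimately show ?thesis by argo
qed

text \<open>Among Q offsets (Q large compared with 2^(card S)) there is one that, at every scale
  j < card S, makes at most card S / 2^j points bad, and makes no point bad at scale card S:
  by bad_offsets the offsets failing one of these conditions are fewer than Q.\<close>
lemma good_offset_index:
  assumes S: "finite S" and w: "0 < w" and n: "n = card S" "0 < n"
  defines "Q \<equiv> 2 * (2^n + 2 * n) + 1"
  obtains q where "q < Q"
    "\<And>j. j < n \<Longrightarrow> real (card (badset w x S (real q * w / Q) (w / (16 * 4^j)))) \<le> real n / 2^j"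
    "card (badset w x S (real q * w / Q) (w / (16 * 4^n))) = 0"
proof -
  have Q0: "0 < Q" unfolding Q_def by simp
  define bad where
    "bad j t = {q \<in> {..<Q}. t < real (card (badset w x S (real q * w / Q) (w / (16 * 4^j))))}"
    for j t
  have four: "(4::real)^j = 2^j * 2^j" for j by (simp add: power_mult_distrib[symmetric])
  have scale: "real (card (bad j (real n / 2^j))) \<le> real Q / 8 * (1/2)^j + 2^j" for j
  proof -
    have "real (card (bad j (real n / 2^j))) \<le> real n * (real Q / (8 * 4^j) + 1) / (real n / 2^j)"
      using bad_offsets[OF S Q0 w, of "real n / 2^j" x j] n unfolding bad_def by simp
    also have "\<dots> = real Q / 8 * (1/2)^j + 2^j" using n by (simp add: four field_simps power_divide)
    finally show ?thesis .
  qed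
  have finest: "real (card (bad n (1/2))) \<le> real Q / 4 + 2 * real n"
  proof -
    have "n < 2^n" by (rule less_exp)
    also have "(2::nat)^n \<le> 4^n" by (simp add: power_mono)
    finally have "real n \<le> 4^n" by (metis less_imp_le of_nat_less_iff of_nat_numeral of_nat_power)
    then have "real Q * real n \<le> real Q * 4^n" by (intro mult_left_mono) simp_all
    then have "real n * (real Q / (8 * 4^n)) \<le> real Q / 8" by (simp add: field_simps)
    moreover have "real (card (bad n (1/2))) \<le> real n * (real Q / (8 * 4^n) + 1) / (1/2)"
      using bad_offsets[OF S Q0 w, of "1/2" x n] n unfolding bad_def by simp
    ultimately show ?thesis by (simp add: algebra_simps)
  qed
  let ?U = "(\<Union>j<n. bad j (real n / 2^j)) \<union> bad n (1/2)"
  have "real (card ?U) \<le> (\<Sum>j<n. real (card (bad j (real n / 2^j)))) + real (card (bad n (1/2)))"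
    using card_Un_le[of "\<Union>j<n. bad j (real n / 2^j)" "bad n (1/2)"]
      card_UN_le[of "{..<n}" "\<lambda>j. bad j (real n / 2^j)"]
    by (simp flip: of_nat_sum)
  also have "\<dots> \<le> (\<Sum>j<n. real Q / 8 * (1/2)^j + 2^j) + (real Q / 4 + 2 * real n)"
    using scale finest by (intro add_mono sum_mono) auto
  also have "\<dots> < real Q" unfolding Q_def by (rule offset_budget)
  finally have "card ?U < card {..<Q}" by simp
  moreover have "finite ?U" unfolding bad_def by auto
  ultimately obtain q where q: "q < Q" "q \<notin> ?U"
    using card_mono[of ?U "{..<Q}"] by (meson not_le subsetI lessThan_iff)
  show ?thesis
  proof (rule that[OF q(1)])
    fix j assume "j < n"
    then have "q \<notin> bad j (real n / 2^j)" using q by blast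
    then show "real (card (badset w x S (real q * w / Q) (w / (16 * 4^j)))) \<le> real n / 2^j"
      using q(1) unfolding bad_def by (simp add: not_less)
  next
    show "card (badset w x S (real q * w / Q) (w / (16 * 4^n))) = 0" using q unfolding bad_def by auto
  qed
qed

lemma good_theta:
  assumes S: "finite S" and w: "0 < w"
  shows "\<exists>\<theta>. 0 \<le> \<theta> \<and> \<theta> < w \<and>
     (\<forall>j::nat. real (card (badset w x S \<theta> (w / (16 * 4^j)))) \<le> real (card S) / 2^j)"
proof (cases "card S = 0")
  case True
  then show ?thesis using S w unfolding badset_def by (intro exI[of _ 0]) simp
next
  case False
  define n where "n = card S"
  define Q where "Q = 2 * (2^n + 2 * n) + 1"
  obtain q where q: "q < Q"
    and small: "\<And>j. j < n \<Longrightarrow> real (card (badset w x S (real q * w / Q) (w / (16 * 4^j))))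
        \<le> real n / 2^j"
    and none: "card (badset w x S (real q * w / Q) (w / (16 * 4^n))) = 0"
    using good_offset_index[OF S w n_def] False unfolding n_def Q_def by auto
  show ?thesis
  proof (intro exI[of _ "real q * w / Q"] conjI allI)
    show "0 \<le> real q * w / Q" "real q * w / Q < w" using w q by (simp_all add: field_simps)
    fix j :: nat
    show "real (card (badset w x S (real q * w / Q) (w / (16 * 4^j)))) \<le> real (card S) / 2^j"
    proof (cases "j < n")
      case True then show ?thesis using small n_def by simp
    next
      case False
      have fin: "finite (badset w x S (real q * w / Q) (w / (16 * 4^n)))" unfolding badset_def
          using S by simp
      have "w / (16 * 4^j) \<le> w / (16 * 4^n)" using False w by (simp add: frac_le power_increasing)
      then have "card (badset w x S (real q * w / Q) (w / (16 * 4^j))) = 0"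
        using none badset_mono card_mono[OF fin] by (metis le_zero_eq)
      then show ?thesis by simp
    qed
  qed
qed

section \<open>Partitions, conditional expectation and energy\<close>

definition partition :: "nat \<Rightarrow> int set set \<Rightarrow> bool" where
  "partition N B \<longleftrightarrow> finite B \<and> \<Union>B = {1..int N} \<and> {} \<notin> B \<and>
     (\<forall>E\<in>B. \<forall>E'\<in>B. E \<noteq> E' \<longrightarrow> E \<inter> E' = {})"

lemma sfactor_partition: "sfactor s N K \<Phi> B \<Longrightarrow> partition N B"
  unfolding sfactor_def partition_def by (elim conjE) (intro conjI; assumption)

context
  fixes N B assumes P: "partition N B"
begin

lemma part_sub: "E \<in> B \<Longrightarrow> E \<subseteq> {1..int N}"
  using P unfolding partition_def by (elim conjE) (drule sym, simp add: Union_upper)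
lemma part_fin: "E \<in> B \<Longrightarrow> finite E"
  by (rule finite_subset[OF part_sub]) simp_all
lemma part_ne: "E \<in> B \<Longrightarrow> E \<noteq> {}"
  using P unfolding partition_def by (elim conjE) (rule notI, simp)
lemma part_cover: "n \<in> {1..int N} \<Longrightarrow> \<exists>E\<in>B. n \<in> E"
  using P unfolding partition_def by (elim conjE) (drule sym, simp)
lemma part_disj: "E \<in> B \<Longrightarrow> E' \<in> B \<Longrightarrow> n \<in> E \<Longrightarrow> n \<in> E' \<Longrightarrow> E = E'"
  using P unfolding partition_def by (elim conjE) (rule ccontr, fastforce)

lemma ce_on:
  assumes E: "E \<in> B" and n: "n \<in> E"
  shows "condexp B f n = (\<Sum>m\<in>E. f m) / real (card E)"
proof -
  have "condexp B f n = (\<Sum>E'\<in>B. if E' = E then (\<Sum>m\<in>E. f m) / real (card E) else 0)"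
    unfolding condexp_def
  proof (rule sum.cong[OF refl])
    fix E' assume E': "E' \<in> B"
    show "(if n \<in> E' then (\<Sum>m\<in>E'. f m) / real (card E') else 0)
        = (if E' = E then (\<Sum>m\<in>E. f m) / real (card E) else 0)"
    proof (cases "n \<in> E'")
      case True then have "E' = E" using part_disj[OF E' E _ n] by simp
      then show ?thesis using n by simp
    next
      case False then show ?thesis using n by auto
    qed
  qed
  also have "\<dots> = (\<Sum>m\<in>E. f m) / real (card E)" using E P unfolding partition_def
      by (simp add: sum.delta')
  finally show ?thesis .
qed

lemma ce_const: "E \<in> B \<Longrightarrow> n \<in> E \<Longrightarrow> n' \<in> E \<Longrightarrow> condexp B f n = condexp B f n'"
  using ce_on by simp

lemma part_sum: "(\<Sum>n\<in>{1..int N}. h n) = (\<Sum>E\<in>B. \<Sum>n\<in>E. h n)"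
proof -
  have "(\<Sum>n\<in>{1..int N}. h n) = (\<Sum>n\<in>\<Union>B. h n)" using P unfolding partition_def by simp
  also have "\<dots> = (\<Sum>E\<in>B. \<Sum>n\<in>E. h n)"
    using sum.Union_disjoint[of B h] part_fin P unfolding partition_def by (simp add: comp_def)
  finally show ?thesis .
qed

lemma ce_inner:
  fixes h :: "int \<Rightarrow> 'a::real_algebra_1"
  assumes hc: "\<And>E n n'. E \<in> B \<Longrightarrow> n \<in> E \<Longrightarrow> n' \<in> E \<Longrightarrow> h n = h n'"
  shows "(\<Sum>n\<in>{1..int N}. of_real (condexp B f n) * h n) = (\<Sum>n\<in>{1..int N}. of_real (f n) * h n)"
proof -
  have "(\<Sum>n\<in>E. of_real (condexp B f n) * h n) = (\<Sum>n\<in>E. of_real (f n) * h n)" if E: "E \<in> B" for E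
  proof -
    obtain n0 where n0: "n0 \<in> E" using part_ne[OF E] by blast
    have cE: "card E > 0" using part_fin[OF E] n0 card_gt_0_iff by blast
    have "(\<Sum>n\<in>E. of_real (condexp B f n) * h n)
        = of_nat (card E) * (of_real ((\<Sum>m\<in>E. f m) / real (card E)) * h n0)"
      by (simp add: ce_on[OF E] hc[OF E _ n0])
    also have "\<dots> = of_real (real (card E) * ((\<Sum>m\<in>E. f m) / real (card E))) * h n0"
      by (simp only: of_real_mult of_real_of_nat_eq mult.assoc)
    also have "\<dots> = (\<Sum>n\<in>E. of_real (f n) * h n)"
      using cE by (simp add: of_real_sum sum_distrib_right hc[OF E _ n0])
    finally show ?thesis .
  qed
  then show ?thesis unfolding part_sum by simp
qed

lemma ce_range:
  assumes f: "\<forall>n\<in>{1..int N}. f n \<in> {0..1}" and n: "n \<in> {1..int N}"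
  shows "0 \<le> condexp B f n \<and> condexp B f n \<le> 1"
proof -
  obtain E where E: "E \<in> B" "n \<in> E" using part_cover[OF n] by blast
  have cE: "0 < card E" using part_fin[OF E(1)] E(2) card_gt_0_iff by blast
  have sub: "E \<subseteq> {1..int N}" using part_sub[OF E(1)] .
  have "0 \<le> (\<Sum>m\<in>E. f m)" using f sub by (intro sum_nonneg) auto
  moreover have "(\<Sum>m\<in>E. f m) \<le> (\<Sum>m\<in>E. 1)" using f sub by (intro sum_mono) auto
  ultimately show ?thesis using cE unfolding ce_on[OF E] by (simp add: field_simps)
qed

lemma energy_le:
  assumes f: "\<forall>n\<in>{1..int N}. f n \<in> {0..1}"
  shows "(\<Sum>n\<in>{1..int N}. (condexp B f n)^2) \<le> real N"
proof -
  have "(\<Sum>n\<in>{1..int N}. (condexp B f n)^2) \<le> (\<Sum>n\<in>{1..int N}. 1)"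
  proof (rule sum_mono)
    fix n assume "n \<in> {1..int N}"
    then have "0 \<le> condexp B f n \<and> condexp B f n \<le> 1" by (rule ce_range[OF f])
    then show "(condexp B f n)^2 \<le> 1" by (intro power_le_one) auto
  qed
  then show ?thesis by simp
qed

end

lemma energy_id:
  assumes P: "partition N B" and P': "partition N B'" and R: "refines B' B"
  shows "(\<Sum>n\<in>{1..int N}. (condexp B' f n - condexp B f n)^2)
       = (\<Sum>n\<in>{1..int N}. (condexp B' f n)^2) - (\<Sum>n\<in>{1..int N}. (condexp B f n)^2)"
proof -
  have c': "condexp B f n = condexp B f n'" if "E' \<in> B'" "n \<in> E'" "n' \<in> E'" for E' n n'
  proof -
    have "\<exists>E\<in>B. E' \<subseteq> E" using R that(1) unfolding refines_def by simp
    then obtain E where E: "E \<in> B" "E' \<subseteq> E" by (elim bexE) simp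
    have "n \<in> E" "n' \<in> E" using E(2) that(2,3) by auto
    then show ?thesis by (rule ce_const[OF P E(1)])
  qed
  have a: "(\<Sum>n\<in>{1..int N}. of_real (condexp B' f n) * condexp B f n)
      = (\<Sum>n\<in>{1..int N}. of_real (f n) * condexp B f n)"
    by (rule ce_inner[OF P']) (rule c')
  have b: "(\<Sum>n\<in>{1..int N}. of_real (condexp B f n) * condexp B f n)
      = (\<Sum>n\<in>{1..int N}. of_real (f n) * condexp B f n)"
    by (rule ce_inner[OF P]) (rule ce_const[OF P])
  have "(\<Sum>n\<in>{1..int N}. (condexp B' f n - condexp B f n)^2)
     = (\<Sum>n\<in>{1..int N}. (condexp B' f n)^2) - 2 * (\<Sum>n\<in>{1..int N}. condexp B' f n * condexp B f n)
       + (\<Sum>n\<in>{1..int N}. (condexp B f n)^2)"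
    by (simp add: power2_diff sum.distrib sum_subtractf sum_distrib_left mult.assoc)
  also have "(\<Sum>n\<in>{1..int N}. condexp B' f n * condexp B f n) = (\<Sum>n\<in>{1..int N}. (condexp B f n)^2)"
    using a b by (simp add: power2_eq_square)
  finally show ?thesis by simp
qed

lemma refines_trans: "refines A B \<Longrightarrow> refines B C \<Longrightarrow> refines A C"
  unfolding refines_def by (meson order_trans)

section \<open>L2 estimates on [N]\<close>

definition L2r :: "nat \<Rightarrow> (int \<Rightarrow> real) \<Rightarrow> real" where
  "L2r N u = sqrt ((\<Sum>n\<in>{1..int N}. (u n)^2) / real N)"

lemma L2N_L2r: "L2N N h = L2r N (\<lambda>n. cmod (h n))"
  unfolding L2N_def L2r_def avgN_def by simp

lemma L2r_mink:
  assumes "\<And>n. n \<in> {1..int N} \<Longrightarrow> \<bar>h n\<bar> \<le> u n + v n" "\<And>n. 0 \<le> u n" "\<And>n. 0 \<le> v n"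
  shows "L2r N h \<le> L2r N u + L2r N v"
proof -
  have L2: "L2r N u = L2_set u {1..int N} / sqrt (real N)" for u
    unfolding L2r_def L2_set_def by (simp add: real_sqrt_divide)
  have "L2_set h {1..int N} = L2_set (\<lambda>n. \<bar>h n\<bar>) {1..int N}" unfolding L2_set_def by simp
  also have "\<dots> \<le> L2_set (\<lambda>n. u n + v n) {1..int N}" by (rule L2_set_mono) (use assms in auto)
  also have "\<dots> \<le> L2_set u {1..int N} + L2_set v {1..int N}" by (rule L2_set_triangle_ineq)
  finally show ?thesis unfolding L2 by (simp add: add_divide_distrib[symmetric] divide_right_mono)
qed

lemma L2r_bad:
  assumes "\<And>n. n \<in> {1..int N} \<Longrightarrow> \<bar>u n\<bar> \<le> 1" "\<And>n. n \<in> {1..int N} \<Longrightarrow> n \<notin> Bad \<Longrightarrow> u n = 0"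
    "real (card (Bad \<inter> {1..int N})) \<le> t * real N" "0 \<le> t"
  shows "L2r N u \<le> sqrt t"
proof (cases "N = 0")
  case True then show ?thesis unfolding L2r_def using assms(4) by simp
next
  case False
  have "(\<Sum>n\<in>{1..int N}. (u n)^2) \<le> (\<Sum>n\<in>{1..int N}. if n \<in> Bad then 1 else 0)"
    using assms(1,2) by (intro sum_mono) (auto simp: abs_square_le_1)
  also have "\<dots> = real (card (Bad \<inter> {1..int N}))"
    by (simp add: sum.If_cases Int_commute)
  finally have "(\<Sum>n\<in>{1..int N}. (u n)^2) / real N \<le> t"
    using assms(3) False by (simp add: divide_le_eq)
  then show ?thesis unfolding L2r_def by simp
qed

section \<open>Measurability of the refined cells\<close>

definition xre :: "(int \<Rightarrow> complex) \<Rightarrow> int \<times> bool \<Rightarrow> real" where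
  "xre \<psi> = (\<lambda>(n, b). if b then Re (\<psi> n) else Im (\<psi> n))"

definition Lcell :: "(int \<Rightarrow> complex) \<Rightarrow> real \<Rightarrow> real \<Rightarrow> int \<Rightarrow> int \<Rightarrow> int set" where
  "Lcell \<psi> w \<theta> a b = {n. \<lfloor>(Re (\<psi> n) - \<theta>) / w\<rfloor> = a \<and> \<lfloor>(Im (\<psi> n) - \<theta>) / w\<rfloor> = b}"

definition good_offset :: "nat \<Rightarrow> (int \<Rightarrow> complex) \<Rightarrow> real \<Rightarrow> real \<Rightarrow> bool" where
  "good_offset N \<psi> w \<theta> \<longleftrightarrow> (\<forall>j::nat.
     real (card (badset w (xre \<psi>) ({1..int N} \<times> UNIV) \<theta> (w / (16 * 4^j)))) \<le> real (2 * N) / 2^j)"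

lemma good_offset_exists:
  assumes "0 < w"
  shows "\<exists>\<theta>. 0 \<le> \<theta> \<and> \<theta> < w \<and> good_offset N \<psi> w \<theta>"
proof -
  have "card ({1..int N} \<times> (UNIV :: bool set)) = 2 * N" by (simp add: card_cartesian_product)
  then show ?thesis
    using good_theta[OF _ assms, of "{1..int N} \<times> UNIV" "xre \<psi>"] unfolding good_offset_def
    by (simp add: mult.commute)
qed

text \<open>At a good offset, the Lipschitz cutoff at scale j agrees with the indicator of the square
  except on at most 2N / 2^j points, so it is L2-close to it.\<close>
lemma cellfun_L2:
  assumes w: "0 < w" and good: "good_offset N \<psi> w \<theta>"
  shows "L2r N (\<lambda>n. \<bar>cellfun (w / (8 * 4 ^ j)) w \<theta> a b (\<psi> n) - indicator (Lcell \<psi> w \<theta> a b) n\<bar>)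
           \<le> sqrt (2 / 2 ^ j)"
proof -
  define \<eta> where "\<eta> = w / (8 * 4 ^ j)"
  have e: "0 < \<eta>" and e2: "\<eta> / 2 = w / (16 * 4^j)" unfolding \<eta>_def using w by simp_all
  define bad where "bad = badset w (xre \<psi>) ({1..int N} \<times> UNIV) \<theta> (w / (16 * 4^j))"
  have fb: "finite bad" unfolding bad_def badset_def by simp
  show ?thesis unfolding \<eta>_def[symmetric]
  proof (rule L2r_bad[where Bad = "fst ` bad"])
    fix n assume "n \<in> {1..int N}"
    show "\<bar>\<bar>cellfun \<eta> w \<theta> a b (\<psi> n) - indicator (Lcell \<psi> w \<theta> a b) n\<bar>\<bar> \<le> 1"
      using cellfun_01[of \<eta> w \<theta> a b "\<psi> n"] by (auto simp: indicator_def)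
  next
    fix n assume n: "n \<in> {1..int N}" and nb: "n \<notin> fst ` bad"
    have far: "\<forall>i::int. \<eta> / 2 \<le> \<bar>xre \<psi> (n, c) - \<theta> - w * of_int i\<bar>" for c
    proof
      fix i :: int
      have "(n, c) \<notin> bad" using nb by force
      then show "\<eta> / 2 \<le> \<bar>xre \<psi> (n, c) - \<theta> - w * of_int i\<bar>"
        using n unfolding bad_def badset_def e2 by (auto simp: not_less)
    qed
    show "\<bar>cellfun \<eta> w \<theta> a b (\<psi> n) - indicator (Lcell \<psi> w \<theta> a b) n\<bar> = 0"
      using cellfun_ind[OF e w, of "\<psi> n" \<theta> a b] far[of True] far[of False]
      by (simp add: indicator_def Lcell_def xre_def)
  next
    have "card (fst ` bad \<inter> {1..int N}) \<le> card (fst ` bad)" by (rule card_mono) (simp_all add: fb)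
    also have "\<dots> \<le> card bad" by (rule card_image_le[OF fb])
    finally have "real (card (fst ` bad \<inter> {1..int N})) \<le> real (card bad)" by simp
    moreover have "real (card bad) \<le> real (2 * N) / 2^j" using good
        unfolding good_offset_def bad_def by blast
    moreover have "real (2 * N) / 2 ^ j = 2 / 2 ^ j * real N" by simp
    ultimately show "real (card (fst ` bad \<inter> {1..int N})) \<le> 2 / 2 ^ j * real N" by linarith
  qed simp
qed

lemma L2_product_indicator:
  assumes e: "\<And>n. 0 \<le> e n \<and> e n \<le> 1" and c: "\<And>n. 0 \<le> c n \<and> c n \<le> 1"
  shows "L2r N (\<lambda>n. \<bar>e n * c n - indicator (E \<inter> L) n\<bar>)
           \<le> L2r N (\<lambda>n. \<bar>e n - indicator E n\<bar>) + L2r N (\<lambda>n. \<bar>c n - indicator L n\<bar>)"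
proof (rule L2r_mink)
  fix n :: int
  have ind: "0 \<le> (indicator A n :: real)" "(indicator A n :: real) \<le> 1" for A
    by (simp_all add: indicator_def)
  show "\<bar>\<bar>e n * c n - indicator (E \<inter> L) n\<bar>\<bar> \<le> \<bar>e n - indicator E n\<bar> + \<bar>c n - indicator L n\<bar>"
    using e[of n] c[of n] ind unfolding abs_abs indicator_inter_arith by (intro prod01_lip) auto
qed simp_all

text \<open>Scale of the cutoff needed for precision 1/M, and the resulting growth of complexity:
  a refined cell E \<inter> Lcell is approximated at precision 1/M by a product of the approximant
  of E at precision 1/(2M) and a cutoff nilsequence of complexity XX C0 w M.\<close>
definition jj :: "real \<Rightarrow> nat" where "jj M = nat \<lceil>8 * M^2\<rceil>"
definition XX :: "real \<Rightarrow> real \<Rightarrow> real \<Rightarrow> real" where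
  "XX C0 w M = C0 + (32 * 4 ^ jj M / w) * C0 + 1"
definition HH :: "real \<Rightarrow> real \<Rightarrow> (real \<Rightarrow> real) \<Rightarrow> real \<Rightarrow> real" where
  "HH C0 w \<Phi> M = \<Phi> (2 * M) + XX C0 w M + \<Phi> (2 * M) * XX C0 w M + 1"

lemma jj_bound: "1 \<le> M \<Longrightarrow> sqrt (2 / 2 ^ jj M) \<le> 1 / (2 * M)"
proof -
  assume M: "1 \<le> M"
  have "8 * M^2 \<le> real (jj M)" unfolding jj_def by (rule real_nat_ceiling_ge)
  also have "real (jj M) \<le> 2 ^ jj M"
    using less_exp[of "jj M"] by (metis less_imp_le of_nat_le_iff of_nat_numeral of_nat_power)
  finally have h: "8 * M^2 \<le> 2 ^ jj M" .
  have "2 / 2 ^ jj M \<le> 2 / (8 * M^2)" using h M by (intro divide_left_mono) simp_all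
  also have "\<dots> = (1 / (2 * M))^2" using M by (simp add: field_simps power2_eq_square)
  finally have "sqrt (2 / 2 ^ jj M) \<le> sqrt ((1 / (2 * M))^2)" by (rule real_sqrt_le_mono)
  then show ?thesis using M by simp
qed

lemma cutoff_nilseq:
  assumes psi: "nilseq s C0 \<psi>" and w: "0 < w"
  shows "nilseq s (XX C0 w M) (\<lambda>n. complex_of_real (cellfun (w / (8 * 4 ^ jj M)) w \<theta> a b (\<psi> n)))"
proof -
  define \<eta> where "\<eta> = w / (8 * 4 ^ jj M)"
  have e: "0 < \<eta>" and e4: "4 / \<eta> = 32 * 4 ^ jj M / w"
    unfolding \<eta>_def using w by (simp_all add: field_simps)
  show ?thesis
    unfolding XX_def e4[symmetric] \<eta>_def[symmetric]
    by (rule nilseq_comp[OF psi]) (use e cellfun_lip[OF e] cellfun_01 in \<open>auto simp: abs_le_iff\<close>)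
qed

lemma cell_meas:
  fixes \<psi> :: "int \<Rightarrow> complex"
  assumes E: "smeasurable s \<Phi> N E" and psi: "nilseq s C0 \<psi>" and w: "0 < w"
    and good: "good_offset N \<psi> w \<theta>"
  shows "smeasurable s (HH C0 w \<Phi>) N (E \<inter> Lcell \<psi> w \<theta> a b)"
  unfolding smeasurable_def
proof (intro conjI allI impI)
  show "E \<inter> Lcell \<psi> w \<theta> a b \<subseteq> {1..int N}" using E unfolding smeasurable_def by blast
  fix M :: real assume M: "1 \<le> M"
  have M2: "1 \<le> 2 * M" using M by simp
  have "\<forall>M\<ge>1. \<exists>\<psi>. nilseq s (\<Phi> M) \<psi> \<and> (\<forall>n. \<psi> n \<in> complex_of_real ` {0..1}) \<and>
          L2N N (\<lambda>n. \<psi> n - complex_of_real (indicator E n)) \<le> 1 / M"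
    using E unfolding smeasurable_def by (rule conjunct2)
  from this[rule_format, OF M2] obtain \<psi>E where pE: "nilseq s (\<Phi> (2 * M)) \<psi>E"
    and rE: "\<forall>n. \<psi>E n \<in> complex_of_real ` {0..1}"
    and lE: "L2N N (\<lambda>n. \<psi>E n - complex_of_real (indicator E n)) \<le> 1 / (2 * M)"
    by blast
  define chi where "chi n = cellfun (w / (8 * 4 ^ jj M)) w \<theta> a b (\<psi> n)" for n
  have pD: "nilseq s (HH C0 w \<Phi> M) (\<lambda>n. \<psi>E n * complex_of_real (chi n))"
    unfolding HH_def chi_def by (rule nilseq_mult[OF pE cutoff_nilseq[OF psi w]])
  define e where "e n = Re (\<psi>E n)" for n
  have eE: "\<psi>E n = complex_of_real (e n)" and e01: "0 \<le> e n \<and> e n \<le> 1" for n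
  proof -
    obtain t where "t \<in> {0..1}" "\<psi>E n = complex_of_real t" using rE by blast
    then show "\<psi>E n = complex_of_real (e n)" "0 \<le> e n \<and> e n \<le> 1" unfolding e_def by simp_all
  qed
  have rD: "\<psi>E n * complex_of_real (chi n) \<in> complex_of_real ` {0..1}" for n
  proof (rule image_eqI)
    show "\<psi>E n * complex_of_real (chi n) = complex_of_real (e n * chi n)" by (simp add: eE)
    show "e n * chi n \<in> {0..1}" using e01[of n] cellfun_01 unfolding chi_def
        by (simp add: mult_le_one)
  qed
  let ?L = "Lcell \<psi> w \<theta> a b"
  have "cmod (\<psi>E n * complex_of_real (chi n) - complex_of_real (indicator (E \<inter> ?L) n))
      = \<bar>e n * chi n - indicator (E \<inter> ?L) n\<bar>" for n
    by (metis eE norm_of_real of_real_diff of_real_mult)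
  then have "L2N N (\<lambda>n. \<psi>E n * complex_of_real (chi n) - complex_of_real (indicator (E \<inter> ?L) n))
      = L2r N (\<lambda>n. \<bar>e n * chi n - indicator (E \<inter> ?L) n\<bar>)"
    unfolding L2N_L2r by simp
  also have "\<dots> \<le> L2r N (\<lambda>n. \<bar>e n - indicator E n\<bar>) + L2r N (\<lambda>n. \<bar>chi n - indicator ?L n\<bar>)"
    using e01 cellfun_01 unfolding chi_def by (intro L2_product_indicator) auto
  also have "L2r N (\<lambda>n. \<bar>e n - indicator E n\<bar>) \<le> 1 / (2 * M)"
  proof -
    have "cmod (complex_of_real (e n) - complex_of_real (indicator E n))
        = \<bar>e n - indicator E n\<bar>" for n
      by (metis norm_of_real of_real_diff)
    then show ?thesis using lE unfolding L2N_L2r eE by simp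
  qed
  also have "L2r N (\<lambda>n. \<bar>chi n - indicator ?L n\<bar>) \<le> 1 / (2 * M)"
    using cellfun_L2[OF w good, of "jj M" a b] jj_bound[OF M] unfolding chi_def by linarith
  finally show "\<exists>\<psi>'. nilseq s (HH C0 w \<Phi> M) \<psi>' \<and> (\<forall>n. \<psi>' n \<in> complex_of_real ` {0..1}) \<and>
       L2N N (\<lambda>n. \<psi>' n - complex_of_real (indicator (E \<inter> ?L) n)) \<le> 1 / M"
    using pD rD by (intro exI[of _ "\<lambda>n. \<psi>E n * complex_of_real (chi n)"] conjI allI) simp_all
qed

section \<open>The energy increment step\<close>

text \<open>Number of grid squares per axis needed to cover the values of a nilsequence bounded by C0.\<close>
definition gridR :: "real \<Rightarrow> real \<Rightarrow> nat" where "gridR C0 w = nat \<lceil>C0 / w\<rceil> + 1"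

definition grid_refine :: "int set set \<Rightarrow> (int \<Rightarrow> complex) \<Rightarrow> real \<Rightarrow> real \<Rightarrow> nat \<Rightarrow> int set set" where
  "grid_refine B \<psi> w \<theta> R =
     (\<lambda>(E, a, b). E \<inter> Lcell \<psi> w \<theta> a b) ` (B \<times> {- int R..int R} \<times> {- int R..int R}) - {{}}"

lemma grid_refine_cell:
  "X \<in> grid_refine B \<psi> w \<theta> R \<Longrightarrow> \<exists>E a b. E \<in> B \<and> X = E \<inter> Lcell \<psi> w \<theta> a b"
  unfolding grid_refine_def by auto

lemma floor_range:
  fixes y C w \<theta> :: real
  assumes w: "0 < w" and C: "0 \<le> C" and y: "\<bar>y\<bar> \<le> C" and th: "0 \<le> \<theta>" "\<theta> < w"
  shows "\<lfloor>(y - \<theta>) / w\<rfloor> \<in> {- int (gridR C w) .. int (gridR C w)}"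
proof -
  have "0 \<le> C / w" using C w by simp
  then have c0: "0 \<le> \<lceil>C / w\<rceil>" by (metis ceiling_mono ceiling_zero)
  have "(y - \<theta>) / w \<le> C / w" using y th w by (simp add: divide_right_mono)
  then have "\<lfloor>(y - \<theta>) / w\<rfloor> \<le> \<lceil>C / w\<rceil>" by (meson floor_le_ceiling floor_mono order_trans)
  moreover have "- C / w - 1 \<le> (y - \<theta>) / w"
  proof -
    have "(- C - w) / w \<le> (y - \<theta>) / w" using y th w by (intro divide_right_mono) linarith+
    then show ?thesis using w by (simp add: diff_divide_distrib)
  qed
  then have "\<lfloor>- C / w - 1\<rfloor> \<le> \<lfloor>(y - \<theta>) / w\<rfloor>" by (rule floor_mono)
  moreover have "- \<lceil>C / w\<rceil> - 1 \<le> \<lfloor>- C / w - 1\<rfloor>" by (simp add: ceiling_def)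
  ultimately show ?thesis using c0 unfolding gridR_def by simp
qed

lemma grid_refine_partition:
  assumes P: "partition N B" and w: "0 < w" and th: "0 \<le> \<theta>" "\<theta> < w"
    and bnd: "\<And>n. cmod (\<psi> n) \<le> C0" and C0: "0 \<le> C0"
  defines "B'' \<equiv> grid_refine B \<psi> w \<theta> (gridR C0 w)"
  shows "partition N B''" and "card B'' \<le> card B * (2 * gridR C0 w + 1)^2"
proof -
  define J where "J = {- int (gridR C0 w) .. int (gridR C0 w)}"
  have fB: "finite B" and fJ: "finite J" using P unfolding partition_def J_def by simp_all
  have cell: "X \<in> B'' \<Longrightarrow> \<exists>E a b. E \<in> B \<and> X = E \<inter> Lcell \<psi> w \<theta> a b" for X
    unfolding B''_def by (rule grid_refine_cell)
  have inJ: "\<lfloor>(Re (\<psi> n) - \<theta>) / w\<rfloor> \<in> J" "\<lfloor>(Im (\<psi> n) - \<theta>) / w\<rfloor> \<in> J" for n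
    using floor_range[OF w C0 _ th] abs_Re_le_cmod abs_Im_le_cmod bnd unfolding J_def
    by (meson order_trans)+
  have "card B'' \<le> card (B \<times> J \<times> J)"
    unfolding B''_def grid_refine_def J_def[symmetric]
    by (meson card_Diff1_le card_image_le finite_Diff finite_SigmaI finite_imageI fB fJ order_trans)
  moreover have "card J = 2 * gridR C0 w + 1" unfolding J_def by simp
  ultimately show "card B'' \<le> card B * (2 * gridR C0 w + 1)^2"
    by (simp add: card_cartesian_product power2_eq_square)
  have cover: "{1..int N} \<subseteq> \<Union>B''"
  proof
    fix n assume n: "n \<in> {1..int N}"
    obtain E where E: "E \<in> B" "n \<in> E" using part_cover[OF P n] by blast
    let ?X = "E \<inter> Lcell \<psi> w \<theta> \<lfloor>(Re (\<psi> n) - \<theta>) / w\<rfloor> \<lfloor>(Im (\<psi> n) - \<theta>) / w\<rfloor>"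
    have "n \<in> ?X" using E unfolding Lcell_def by simp
    moreover have "?X \<in> B''"
      unfolding B''_def grid_refine_def J_def[symmetric] using E(1) inJ \<open>n \<in> ?X\<close> by force
    ultimately show "n \<in> \<Union>B''" by blast
  qed
  have disj: "X \<inter> Y = {}" if XY: "X \<in> B''" "Y \<in> B''" "X \<noteq> Y" for X Y
  proof (rule ccontr)
    obtain E a b where X: "E \<in> B" "X = E \<inter> Lcell \<psi> w \<theta> a b" using cell[OF XY(1)] by blast
    obtain E' a' b' where Y: "E' \<in> B" "Y = E' \<inter> Lcell \<psi> w \<theta> a' b'" using cell[OF XY(2)] by blast
    assume "X \<inter> Y \<noteq> {}"
    then obtain n where "n \<in> X" "n \<in> Y" by blast
    then have "E = E'" "a = a'" "b = b'" using part_disj[OF P X(1) Y(1)] X Y unfolding Lcell_def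
        by auto
    then show False using XY(3) X Y by simp
  qed
  have "\<Union>B'' \<subseteq> {1..int N}" using cell part_sub[OF P] by blast
  moreover have "finite B''" unfolding B''_def grid_refine_def using fB by simp
  moreover have "{} \<notin> B''" unfolding B''_def grid_refine_def by simp
  ultimately show "partition N B''" unfolding partition_def using cover disj by blast
qed

lemma grid_refine_sfactor:
  assumes sf: "sfactor s N K \<Phi> B" and psi: "nilseq s C0 \<psi>" and w: "0 < w"
    and th: "0 \<le> \<theta>" "\<theta> < w" and good: "good_offset N \<psi> w \<theta>"
  defines "B'' \<equiv> grid_refine B \<psi> w \<theta> (gridR C0 w)"
  shows "sfactor s N (K * (2 * gridR C0 w + 1)^2) (HH C0 w \<Phi>) B''" and "refines B'' B"
proof -
  have cell: "X \<in> B'' \<Longrightarrow> \<exists>E a b. E \<in> B \<and> X = E \<inter> Lcell \<psi> w \<theta> a b" for X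
    unfolding B''_def by (rule grid_refine_cell)
  have meas: "smeasurable s (HH C0 w \<Phi>) N X" if X: "X \<in> B''" for X
  proof -
    obtain E a b where E: "E \<in> B" "X = E \<inter> Lcell \<psi> w \<theta> a b" using cell[OF X] by blast
    have "smeasurable s \<Phi> N E" using sf E(1) unfolding sfactor_def by blast
    then show ?thesis unfolding E(2) by (rule cell_meas[OF _ psi w good])
  qed
  have P'': "partition N B''" and card: "card B'' \<le> card B * (2 * gridR C0 w + 1)^2"
    using grid_refine_partition[where \<psi> = \<psi>, OF sfactor_partition[OF sf] w th nilseq_bound[OF psi]
        nilseq_C_nonneg[OF psi]]
    unfolding B''_def by blast+
  have "card B \<le> K" using sf unfolding sfactor_def by simp
  then have "card B'' \<le> K * (2 * gridR C0 w + 1)^2" using card by (meson le_trans mult_le_mono1)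
  with P'' meas show "sfactor s N (K * (2 * gridR C0 w + 1)^2) (HH C0 w \<Phi>) B''"
    unfolding sfactor_def partition_def by (elim conjE) (intro conjI; (assumption | blast))
  show "refines B'' B" unfolding refines_def using cell by blast
qed

definition round_grid :: "real \<Rightarrow> real \<Rightarrow> complex \<Rightarrow> complex" where
  "round_grid w \<theta> z = Complex (\<theta> + w * \<lfloor>(Re z - \<theta>) / w\<rfloor>) (\<theta> + w * \<lfloor>(Im z - \<theta>) / w\<rfloor>)"

lemma round_grid_close:
  assumes w: "0 < w"
  shows "cmod (z - round_grid w \<theta> z) \<le> 2 * w"
proof -
  have fr: "\<bar>y - (\<theta> + w * \<lfloor>(y - \<theta>) / w\<rfloor>)\<bar> \<le> w" for y
  proof -
    have "of_int \<lfloor>(y - \<theta>) / w\<rfloor> * w \<le> y - \<theta>"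
      by (metis of_int_floor_le pos_le_divide_eq w)
    moreover have "y - \<theta> < (of_int \<lfloor>(y - \<theta>) / w\<rfloor> + 1) * w"
      by (metis real_of_int_floor_add_one_gt pos_divide_less_eq w)
    ultimately show ?thesis by (simp add: abs_le_iff algebra_simps)
  qed
  have "cmod (z - round_grid w \<theta> z) \<le> \<bar>Re (z - round_grid w \<theta> z)\<bar> + \<bar>Im (z - round_grid w \<theta> z)\<bar>"
    by (rule cmod_le)
  also have "\<dots> \<le> w + w" using fr[of "Re z"] fr[of "Im z"] unfolding round_grid_def
      by (intro add_mono) simp_all
  finally show ?thesis by simp
qed

lemma round_grid_Lcell:
  "n \<in> Lcell \<psi> w \<theta> a b \<Longrightarrow> round_grid w \<theta> (\<psi> n) = Complex (\<theta> + w * a) (\<theta> + w * b)"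
  unfolding Lcell_def round_grid_def by simp

lemma l1_to_l2:
  fixes D :: "'a \<Rightarrow> real"
  assumes a: "0 \<le> a" and l1: "a * real (card A) \<le> (\<Sum>n\<in>A. \<bar>D n\<bar>)"
  shows "a^2 * real (card A) \<le> (\<Sum>n\<in>A. (D n)^2)"
proof -
  have "(\<Sum>n\<in>A. 2 * a * \<bar>D n\<bar> - a^2) \<le> (\<Sum>n\<in>A. (D n)^2)"
  proof (rule sum_mono)
    fix n
    have "0 \<le> (\<bar>D n\<bar> - a)^2" by simp
    then show "2 * a * \<bar>D n\<bar> - a^2 \<le> (D n)^2" by (simp add: power2_diff power2_abs algebra_simps)
  qed
  moreover have "(\<Sum>n\<in>A. 2 * a * \<bar>D n\<bar> - a^2) = 2 * a * (\<Sum>n\<in>A. \<bar>D n\<bar>) - a^2 * real (card A)"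
    by (simp add: sum_subtractf sum_distrib_left)
  moreover have "2 * a * (a * real (card A)) \<le> 2 * a * (\<Sum>n\<in>A. \<bar>D n\<bar>)" using l1 a
      by (simp add: mult_left_mono)
  ultimately show ?thesis by (simp add: power2_eq_square)
qed

lemma correlation_perturb:
  fixes g :: "'a \<Rightarrow> real" and \<psi> \<phi> :: "'a \<Rightarrow> complex"
  assumes g: "\<And>n. n \<in> A \<Longrightarrow> \<bar>g n\<bar> \<le> 1" and close: "\<And>n. cmod (\<psi> n - \<phi> n) \<le> \<delta>"
  shows "cmod (\<Sum>n\<in>A. complex_of_real (g n) * cnj (\<psi> n))
           \<le> cmod (\<Sum>n\<in>A. complex_of_real (g n) * cnj (\<phi> n)) + \<delta> * real (card A)"
proof -
  let ?S = "\<lambda>u. \<Sum>n\<in>A. complex_of_real (g n) * cnj (u n)"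
  have "?S \<psi> = ?S \<phi> + ?S (\<lambda>n. \<psi> n - \<phi> n)" by (simp add: right_diff_distrib sum_subtractf)
  then have "cmod (?S \<psi>) \<le> cmod (?S \<phi>) + cmod (?S (\<lambda>n. \<psi> n - \<phi> n))" by (simp add: norm_triangle_ineq)
  also have "cmod (?S (\<lambda>n. \<psi> n - \<phi> n)) \<le> (\<Sum>n\<in>A. \<delta>)"
  proof (rule order_trans[OF norm_sum sum_mono])
    fix n assume "n \<in> A"
    then have "\<bar>g n\<bar> * cmod (\<psi> n - \<phi> n) \<le> 1 * \<delta>"
      using g close[of n] by (intro mult_mono) (simp_all add: order_trans[OF norm_ge_zero close])
    then show "cmod (complex_of_real (g n) * cnj (\<psi> n - \<phi> n)) \<le> \<delta>"
      by (simp only: norm_mult norm_of_real complex_mod_cnj mult_1)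
  qed
  finally show ?thesis by (simp add: mult.commute)
qed

lemma energy_increment:
  fixes \<psi> \<phi> :: "int \<Rightarrow> complex"
  assumes P: "partition N B" and P'': "partition N B''" and R: "refines B'' B"
    and f: "\<forall>n\<in>{1..int N}. f n \<in> {0..1}" and c0: "0 < c0" "c0 \<le> 1"
    and bnd: "\<And>n. cmod (\<psi> n) \<le> C0" and C0: "0 \<le> C0"
    and corr: "c0 \<le> cmod (avgN N (\<lambda>n. complex_of_real (f n - condexp B f n) * cnj (\<psi> n)))"
    and close: "\<And>n. cmod (\<psi> n - \<phi> n) \<le> c0 / 2"
    and const: "\<And>X n n'. X \<in> B'' \<Longrightarrow> n \<in> X \<Longrightarrow> n' \<in> X \<Longrightarrow> \<phi> n = \<phi> n'"
  shows "(\<Sum>n\<in>{1..int N}. (condexp B f n)^2) + (c0 / (2 * (C0 + 1)))^2 * real N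
           \<le> (\<Sum>n\<in>{1..int N}. (condexp B'' f n)^2)"
proof -
  define g where "g n = f n - condexp B f n" for n
  define D where "D n = condexp B'' f n - condexp B f n" for n
  define a where "a = c0 / (2 * (C0 + 1))"
  have N: "0 < N" using corr c0 unfolding avgN_def by (cases N) simp_all
  have gb: "\<bar>g n\<bar> \<le> 1" if "n \<in> {1..int N}" for n
  proof -
    have "0 \<le> f n" "f n \<le> 1" using f that by auto
    then show ?thesis using ce_range[OF P f that] unfolding g_def by (simp add: abs_le_iff)
  qed
  have phib: "cmod (\<phi> n) \<le> C0 + 1" for n
    using norm_triangle_ineq4[of "\<psi> n" "\<psi> n - \<phi> n"] bnd[of n] close[of n] c0 by simp
  let ?S = "\<lambda>u. \<Sum>n\<in>{1..int N}. complex_of_real (g n) * cnj (u n)"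
  have "c0 * real N \<le> cmod (?S \<psi>)"
    using corr N unfolding avgN_def g_def by (simp add: norm_divide field_simps)
  also have "\<dots> \<le> cmod (?S \<phi>) + c0 / 2 * real (card {1..int N})"
    using gb close by (rule correlation_perturb)
  text \<open>\<phi> is constant on the cells of B'', so only D = E(f|B'') - E(f|B) correlates with it.\<close>
  also have "?S \<phi> = (\<Sum>n\<in>{1..int N}. complex_of_real (D n) * cnj (\<phi> n))"
  proof -
    have "(\<Sum>n\<in>{1..int N}. complex_of_real (condexp B'' f n) * cnj (\<phi> n))
        = (\<Sum>n\<in>{1..int N}. complex_of_real (f n) * cnj (\<phi> n))"
      by (rule ce_inner[OF P'']) (metis const)
    then show ?thesis unfolding g_def D_def by (simp add: left_diff_distrib sum_subtractf)
  qed
  also have "cmod (\<Sum>n\<in>{1..int N}. complex_of_real (D n) * cnj (\<phi> n))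
      \<le> (\<Sum>n\<in>{1..int N}. \<bar>D n\<bar> * (C0 + 1))"
  proof (rule order_trans[OF norm_sum sum_mono])
    fix n show "cmod (complex_of_real (D n) * cnj (\<phi> n)) \<le> \<bar>D n\<bar> * (C0 + 1)"
      using phib[of n] by (simp add: norm_mult mult_left_mono)
  qed
  finally have "c0 * real N \<le> (C0 + 1) * (\<Sum>n\<in>{1..int N}. \<bar>D n\<bar>) + c0 / 2 * real N"
    by (simp add: sum_distrib_left mult.commute)
  then have "a * real (card {1..int N}) \<le> (\<Sum>n\<in>{1..int N}. \<bar>D n\<bar>)"
    unfolding a_def using C0 by (simp add: field_simps)
  moreover have "0 \<le> a" unfolding a_def using c0 C0 by simp
  ultimately have "a^2 * real (card {1..int N}) \<le> (\<Sum>n\<in>{1..int N}. (D n)^2)"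
    by (intro l1_to_l2)
  then have "a^2 * real N \<le> (\<Sum>n\<in>{1..int N}. (D n)^2)" by simp
  also have "\<dots> = (\<Sum>n\<in>{1..int N}. (condexp B'' f n)^2) - (\<Sum>n\<in>{1..int N}. (condexp B f n)^2)"
    unfolding D_def by (rule energy_id[OF P P'' R])
  finally show ?thesis unfolding a_def by simp
qed

lemma refinement_step:
  fixes \<psi> :: "int \<Rightarrow> complex"
  assumes sf: "sfactor s N K \<Phi> B" and f: "\<forall>n\<in>{1..int N}. f n \<in> {0..1}"
    and psi: "nilseq s C0 \<psi>" and c0: "0 < c0" "c0 \<le> 1"
    and corr: "c0 \<le> cmod (avgN N (\<lambda>n. complex_of_real (f n - condexp B f n) * cnj (\<psi> n)))"
  shows "\<exists>B''. sfactor s N (K * (2 * gridR C0 (c0 / 4) + 1)^2) (HH C0 (c0 / 4) \<Phi>) B''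
      \<and> refines B'' B \<and>
           (\<Sum>n\<in>{1..int N}. (condexp B f n)^2) + (c0 / (2 * (C0 + 1)))^2 * real N
             \<le> (\<Sum>n\<in>{1..int N}. (condexp B'' f n)^2)"
proof -
  define w where "w = c0 / 4"
  have w: "0 < w" unfolding w_def using c0 by simp
  obtain \<theta> where th: "0 \<le> \<theta>" "\<theta> < w" and good: "good_offset N \<psi> w \<theta>"
    using good_offset_exists[OF w] by blast
  define B'' where "B'' = grid_refine B \<psi> w \<theta> (gridR C0 w)"
  have SF: "sfactor s N (K * (2 * gridR C0 w + 1)^2) (HH C0 w \<Phi>) B''" and R: "refines B'' B"
    using grid_refine_sfactor[OF sf psi w th good] unfolding B''_def by blast+
  have close: "cmod (\<psi> n - round_grid w \<theta> (\<psi> n)) \<le> c0 / 2" for n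
    using round_grid_close[OF w] unfolding w_def by simp
  have const: "round_grid w \<theta> (\<psi> n) = round_grid w \<theta> (\<psi> n')" if "X \<in> B''" "n \<in> X" "n' \<in> X" for X n n'
    using grid_refine_cell[of X B \<psi> w \<theta>] that round_grid_Lcell unfolding B''_def by fastforce
  have "(\<Sum>n\<in>{1..int N}. (condexp B f n)^2) + (c0 / (2 * (C0 + 1)))^2 * real N
      \<le> (\<Sum>n\<in>{1..int N}. (condexp B'' f n)^2)"
    by (rule energy_increment[OF sfactor_partition[OF sf] sfactor_partition[OF SF] R f c0
        nilseq_bound[OF psi] nilseq_C_nonneg[OF psi] corr close const])
  then show ?thesis using SF R unfolding w_def by blast
qed

lemma jj_mono: "0 < x \<Longrightarrow> x \<le> y \<Longrightarrow> jj x \<le> jj y"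
  unfolding jj_def by (intro nat_mono ceiling_mono) (simp add: power_mono)

lemma XX_mono: "0 \<le> C0 \<Longrightarrow> 0 < w \<Longrightarrow> 0 < x \<Longrightarrow> x \<le> y \<Longrightarrow> XX C0 w x \<le> XX C0 w y"
proof -
  assume C0: "0 \<le> C0" and w: "0 < w" and xy: "0 < x" "x \<le> y"
  have "(4::real) ^ jj x \<le> 4 ^ jj y" using jj_mono[OF xy] by (simp add: power_increasing)
  then have "32 * 4 ^ jj x / w \<le> 32 * 4 ^ jj y / w" using w by (simp add: divide_right_mono)
  then have "(32 * 4 ^ jj x / w) * C0 \<le> (32 * 4 ^ jj y / w) * C0" using C0 by (rule mult_right_mono)
  then show ?thesis unfolding XX_def by simp
qed

lemma XX_pos: "0 \<le> C0 \<Longrightarrow> 0 < w \<Longrightarrow> 1 \<le> XX C0 w x"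
  unfolding XX_def by simp

lemma growth_HH:
  assumes g: "growth \<Phi>" and C0: "0 \<le> C0" and w: "0 < w"
  shows "growth (HH C0 w \<Phi>)"
  unfolding growth_def
proof (intro conjI allI impI)
  fix x y :: real assume x: "0 < x" and xy: "x \<le> y"
  have p1: "\<Phi> (2 * x) \<le> \<Phi> (2 * y)" and p0: "0 \<le> \<Phi> (2 * x)"
    using g x xy unfolding growth_def by (auto intro: order_trans[of 0 "2 * x"])
  have q1: "XX C0 w x \<le> XX C0 w y" and q0: "0 \<le> XX C0 w x"
    using XX_mono[OF C0 w x xy] XX_pos[OF C0 w, of x] by simp_all
  have "\<Phi> (2 * x) * XX C0 w x \<le> \<Phi> (2 * y) * XX C0 w y" using p1 q1 p0 q0 by (intro mult_mono) simp_all
  then show "HH C0 w \<Phi> x \<le> HH C0 w \<Phi> y" unfolding HH_def using p1 q1 by simp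
next
  fix x :: real assume x: "0 < x"
  have p: "2 * x \<le> \<Phi> (2 * x)" using g x unfolding growth_def by simp
  have "0 \<le> \<Phi> (2 * x) * XX C0 w x" using p x XX_pos[OF C0 w, of x] by simp
  then show "x \<le> HH C0 w \<Phi> x" unfolding HH_def using p x XX_pos[OF C0 w, of x] by linarith
qed

lemma HH_ge:
  assumes g: "growth \<Phi>" and C0: "0 \<le> C0" and w: "0 < w" and x: "0 < x"
  shows "\<Phi> x \<le> HH C0 w \<Phi> x"
proof -
  have "\<Phi> x \<le> \<Phi> (2 * x)" and p: "2 * x \<le> \<Phi> (2 * x)" using g x unfolding growth_def by simp_all
  moreover have "0 \<le> \<Phi> (2 * x) * XX C0 w x" using p x XX_pos[OF C0 w, of x] by simp
  ultimately show ?thesis using XX_pos[OF C0 w, of x] unfolding HH_def by simp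
qed

lemma growth_iter: "growth \<Phi> \<Longrightarrow> 0 \<le> C0 \<Longrightarrow> 0 < w \<Longrightarrow> growth ((HH C0 w ^^ k) \<Phi>)"
  by (induction k) (simp_all add: growth_HH)

lemma iter_mono:
  assumes "growth \<Phi>" "0 \<le> C0" "0 < w" "0 < x" "k \<le> k'"
  shows "(HH C0 w ^^ k) \<Phi> x \<le> (HH C0 w ^^ k') \<Phi> x"
  using assms(5)
proof (induction k' rule: dec_induct)
  case (step k')
  have "(HH C0 w ^^ k') \<Phi> x \<le> HH C0 w ((HH C0 w ^^ k') \<Phi>) x"
    by (rule HH_ge[OF growth_iter[OF assms(1-3)] assms(2,3,4)])
  then show ?case using step by simp
qed simp

lemma sfactor_mono:
  assumes "sfactor s N K \<Phi> B" "K \<le> K'" "\<And>x. 1 \<le> x \<Longrightarrow> \<Phi> x \<le> \<Phi>' x"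
  shows "sfactor s N K' \<Phi>' B"
proof -
  have "smeasurable s \<Phi>' N E" if "smeasurable s \<Phi> N E" for E
    using that assms(3) nilseq_mono unfolding smeasurable_def by blast
  then show ?thesis using assms(1,2) unfolding sfactor_def by (meson order_trans)
qed

section \<open>Iterating the energy increment\<close>

definition inverse_bound :: "nat \<Rightarrow> real \<Rightarrow> real \<Rightarrow> real \<Rightarrow> bool" where
  "inverse_bound s \<epsilon> C c0 \<longleftrightarrow> (\<forall>N B (f :: int \<Rightarrow> real). partition N B \<longrightarrow> (\<forall>n\<in>{1..int N}. f n \<in> {0..1}) \<longrightarrow>
     \<epsilon> < gowersU (s + 1) N (\<lambda>n. complex_of_real (f n - condexp B f n)) \<longrightarrow>
     (\<exists>\<psi>. nilseq s C \<psi> \<and> c0 \<le> cmod (avgN N (\<lambda>n. complex_of_real (f n - condexp B f n) * cnj (\<psi> n)))))"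

lemma GI_correlation:
  assumes "GI s" and "0 < \<epsilon>"
  shows "\<exists>C c0. 0 \<le> C \<and> 0 < c0 \<and> c0 \<le> 1 \<and> inverse_bound s \<epsilon> C c0"
proof -
  obtain C c where Cc: "C > 0" "c > 0" and inv: "\<forall>N::nat. \<forall>h::int \<Rightarrow> complex.
      (\<forall>n\<in>{1..int N}. cmod (h n) \<le> 1) \<longrightarrow> gowersU (s + 1) N h \<ge> \<epsilon> \<longrightarrow>
      (\<exists>\<psi>. nilseq s C \<psi> \<and> cmod (avgN N (\<lambda>n. h n * cnj (\<psi> n))) \<ge> c)"
    using assms unfolding GI_def by blast
  have "inverse_bound s \<epsilon> C (min c 1)"
    unfolding inverse_bound_def
  proof (intro allI impI)
    fix N B and f :: "int \<Rightarrow> real"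
    assume P: "partition N B" and f: "\<forall>n\<in>{1..int N}. f n \<in> {0..1}"
      and big: "\<epsilon> < gowersU (s + 1) N (\<lambda>n. complex_of_real (f n - condexp B f n))"
    have "cmod (complex_of_real (f n - condexp B f n)) \<le> 1" if n: "n \<in> {1..int N}" for n
    proof -
      have "0 \<le> f n" "f n \<le> 1" using f n by auto
      then have "\<bar>f n - condexp B f n\<bar> \<le> 1" using ce_range[OF P f n] by (simp add: abs_le_iff)
      then show ?thesis by (simp only: norm_of_real)
    qed
    then obtain \<psi> where "nilseq s C \<psi>"
      "c \<le> cmod (avgN N (\<lambda>n. complex_of_real (f n - condexp B f n) * cnj (\<psi> n)))"
      using inv big by (meson less_imp_le)
    then show "\<exists>\<psi>. nilseq s C \<psi> \<and>
        min c 1 \<le> cmod (avgN N (\<lambda>n. complex_of_real (f n - condexp B f n) * cnj (\<psi> n)))"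
      by (meson min.coboundedI1)
  qed
  then show ?thesis using Cc by (intro exI[of _ C] exI[of _ "min c 1"]) auto
qed

text \<open>Each step multiplies the
  number of cells by L and applies H to the growth function, and raises the energy by inc N;
  since the energy never exceeds N, t further steps suffice once N < energy + t inc N.\<close>
lemma energy_iteration:
  fixes f :: "int \<Rightarrow> real"
  assumes C: "0 \<le> C" and c0: "0 < c0" "c0 \<le> 1" and g: "growth \<Phi>"
    and corr: "inverse_bound s \<epsilon> C c0"
    and f: "\<forall>n\<in>{1..int N}. f n \<in> {0..1}"
  defines "L \<equiv> (2 * gridR C (c0 / 4) + 1)^2" and "H \<equiv> HH C (c0 / 4)"
    and "inc \<equiv> (c0 / (2 * (C + 1)))^2"
  shows "sfactor s N (M * L^k) ((H ^^ k) \<Phi>) B \<Longrightarrow> refines B B0 \<Longrightarrow>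
    real N < (\<Sum>n\<in>{1..int N}. (condexp B f n)^2) + real t * inc * real N \<Longrightarrow>
    \<exists>B'. sfactor s N (M * L^(k + t)) ((H ^^ (k + t)) \<Phi>) B' \<and> refines B' B0 \<and>
       gowersU (s + 1) N (\<lambda>n. complex_of_real (f n - condexp B' f n)) \<le> \<epsilon>"
proof (induction t arbitrary: k B)
  case 0
  then show ?case using energy_le[OF sfactor_partition[OF 0(1)] f] by simp
next
  case (Suc t)
  have w: "0 < c0 / 4" using c0 by simp
  show ?case
  proof (cases "gowersU (s + 1) N (\<lambda>n. complex_of_real (f n - condexp B f n)) \<le> \<epsilon>")
    case True
    have "sfactor s N (M * L^(k + Suc t)) ((H ^^ (k + Suc t)) \<Phi>) B"
    proof (rule sfactor_mono[OF Suc(2)])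
      show "M * L ^ k \<le> M * L ^ (k + Suc t)" unfolding L_def
          by (intro mult_le_mono2 power_increasing) simp_all
      show "(H ^^ k) \<Phi> x \<le> (H ^^ (k + Suc t)) \<Phi> x" if "1 \<le> x" for x
        unfolding H_def using that by (intro iter_mono[OF g C w]) simp_all
    qed
    then show ?thesis using True Suc(3) by blast
  next
    case False
    then have "\<epsilon> < gowersU (s + 1) N (\<lambda>n. complex_of_real (f n - condexp B f n))" by simp
    then obtain \<psi> where psi: "nilseq s C \<psi>"
      and cor: "c0 \<le> cmod (avgN N (\<lambda>n. complex_of_real (f n - condexp B f n) * cnj (\<psi> n)))"
      using corr sfactor_partition[OF Suc(2)] f unfolding inverse_bound_def by blast
    obtain B'' where B'': "sfactor s N (M * L^k * L) (H ((H ^^ k) \<Phi>)) B''" and R: "refines B'' B"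
      and en: "(\<Sum>n\<in>{1..int N}. (condexp B f n)^2) + inc * real N
          \<le> (\<Sum>n\<in>{1..int N}. (condexp B'' f n)^2)"
      using refinement_step[OF Suc(2) f psi c0 cor] unfolding L_def H_def inc_def by blast
    have "M * L^k * L = M * L^Suc k" by (simp add: mult.assoc power_Suc2)
    then have B'': "sfactor s N (M * L^Suc k) ((H ^^ Suc k) \<Phi>) B''" using B''
        by (simp only: funpow.simps comp_apply)
    have "real N < (\<Sum>n\<in>{1..int N}. (condexp B'' f n)^2) + real t * inc * real N"
      using Suc(4) en by (simp add: algebra_simps)
    then show ?thesis using Suc.IH[OF B'' refines_trans[OF R Suc(3)]] by simp
  qed
qed

lemma gowersU_0: "gowersU k 0 f = 0"
  unfolding gowersU_def gsum_def by simp

lemma regularise: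
  fixes f :: "int \<Rightarrow> real"
  assumes C: "0 \<le> C" and c0: "0 < c0" "c0 \<le> 1" and g: "growth \<Phi>" and eps: "0 < \<epsilon>"
    and corr: "inverse_bound s \<epsilon> C c0"
    and f: "\<forall>n\<in>{1..int N}. f n \<in> {0..1}" and sf: "sfactor s N M \<Phi> B"
    and T: "1 < real T * (c0 / (2 * (C + 1)))^2"
  shows "\<exists>B'. sfactor s N (M * ((2 * gridR C (c0 / 4) + 1)^2)^T) ((HH C (c0 / 4) ^^ T) \<Phi>) B' \<and>
           refines B' B \<and> gowersU (s + 1) N (\<lambda>n. complex_of_real (f n - condexp B' f n)) \<le> \<epsilon>"
proof (cases "N = 0")
  case True
  have "sfactor s N (M * ((2 * gridR C (c0 / 4) + 1)^2)^T) ((HH C (c0 / 4) ^^ T) \<Phi>) B"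
  proof (rule sfactor_mono[OF sf])
    show "M \<le> M * ((2 * gridR C (c0 / 4) + 1)^2)^T" by simp
    show "\<Phi> x \<le> (HH C (c0 / 4) ^^ T) \<Phi> x" if "1 \<le> x" for x
      using iter_mono[OF g C _ _ le0, of "c0 / 4" x] that c0 by simp
  qed
  then show ?thesis using True eps gowersU_0 unfolding refines_def by (metis less_imp_le order_refl)
next
  case False
  have "0 \<le> (\<Sum>n\<in>{1..int N}. (condexp B f n)^2)" by (simp add: sum_nonneg)
  moreover have "real N < real T * (c0 / (2 * (C + 1)))^2 * real N" using T False by simp
  ultimately show ?thesis
    using energy_iteration[OF C c0 g corr f, where M = M and k = 0 and B = B and B0 = B and t = T] sf
    unfolding refines_def by auto
qed

theorem mainTheorem9:
  fixes s :: nat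
  assumes "1 \<le> s" and "GI s"
  shows "\<forall>(M::nat) (\<epsilon>::real). \<epsilon> > 0 \<longrightarrow>
           (\<exists>K::nat. \<forall>\<Phi>. growth \<Phi> \<longrightarrow>
              (\<exists>\<Phi>'. growth \<Phi>' \<and>
                 (\<forall>(N::nat) B (f::int \<Rightarrow> real).
                    sfactor s N M \<Phi> B \<longrightarrow> (\<forall>n\<in>{1..int N}. f n \<in> {0..1}) \<longrightarrow>
                    (\<exists>B'. sfactor s N K \<Phi>' B' \<and> refines B' B \<and>
                       gowersU (s + 1) N (\<lambda>n. complex_of_real (f n - condexp B' f n)) \<le> \<epsilon>))))"
proof (intro allI impI)
  fix M :: nat and \<epsilon> :: real assume eps: "\<epsilon> > 0"
  obtain C c0 where C: "0 \<le> C" and c0: "0 < c0" "c0 \<le> 1" and corr: "inverse_bound s \<epsilon> C c0"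
    using GI_correlation[OF assms(2) eps] by blast
  obtain T :: nat where T: "1 < real T * (c0 / (2 * (C + 1)))^2"
    using ex_less_of_nat_mult[of "(c0 / (2 * (C + 1)))^2" 1] c0 C by auto
  define K where "K = M * ((2 * gridR C (c0 / 4) + 1)^2)^T"
  define \<Phi>' where "\<Phi>' \<Phi> = (HH C (c0 / 4) ^^ T) \<Phi>" for \<Phi> :: "real \<Rightarrow> real"
  have "growth (\<Phi>' \<Phi>)" if "growth \<Phi>" for \<Phi>
    using growth_iter[OF that C] c0 unfolding \<Phi>'_def by simp
  moreover have "\<exists>B'. sfactor s N K (\<Phi>' \<Phi>) B' \<and> refines B' B \<and>
      gowersU (s + 1) N (\<lambda>n. complex_of_real (f n - condexp B' f n)) \<le> \<epsilon>"
    if "growth \<Phi>" "sfactor s N M \<Phi> B" "\<forall>n\<in>{1..int N}. f n \<in> {0..1}" for \<Phi> N B f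
    using regularise[OF C c0 that(1) eps corr that(3,2) T] unfolding K_def \<Phi>'_def by blast
  ultimately show "\<exists>K. \<forall>\<Phi>. growth \<Phi> \<longrightarrow> (\<exists>\<Phi>'. growth \<Phi>' \<and> (\<forall>N B f. sfactor s N M \<Phi> B \<longrightarrow>
      (\<forall>n\<in>{1..int N}. f n \<in> {0..1}) \<longrightarrow> (\<exists>B'. sfactor s N K \<Phi>' B' \<and> refines B' B \<and>
         gowersU (s + 1) N (\<lambda>n. complex_of_real (f n - condexp B' f n)) \<le> \<epsilon>)))"
    by blast
qed

end
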